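(* Suppose Assumption A holds with $\beta,\gamma\in(0,\infty)$ and the noise satisfies Assumption B. Let $$\theta=\frac{\mu^2\gamma\rho^2(\gamma+2\beta)+8L^2}{2\mu\gamma\rho^2},\qquad\kappa=\frac{\mu\gamma}{2},$$ and run MD-SP with noisy feedback and learning rates $\eta_t=1/(\kappa t+2\theta)$ from an arbitrary $\pi^0\in\mathcal X$. Then for all $t\ge0$, $$\mathbb E[D_\psi(\pi^{\mu,\sigma},\pi^{t+1})]\le\frac{2\theta-\kappa}{\kappa t+2\theta}D_\psi(\pi^{\mu,\sigma},\pi^0)+\frac{NC^2}{\rho(\kappa t+2\theta)}\Big(\frac1\kappa\log\Big(\frac\kappa{2\theta}t+1\Big)+\frac1{2\theta}\Big).$$
   Context: Game. Let $N\ge1$. For each $i\in[N]$, $\mathcal X_i\subseteq\mathbb R^{d_i}$ is a nonempty compact convex set, and $\mathcal X=\prod_i\mathcal X_i$. Each $v_i:\mathcal X\to\mathbb R$ is differentiable, with block gradient $\nabla_{\pi_i}v_i$. The norm is Euclidean, with $\|\pi\|^2=\sum_i\|\pi_i\|^2$. The game is monotone: $\sum_i\langle\nabla_{\pi_i}v_i(\pi)-\nabla_{\pi_i}v_i(\pi'),\pi_i-\pi_i'\rangle\le0$. The game is $L$-smooth: $\sum_i\|\nabla_{\pi_i}v_i(\pi)-\nabla_{\pi_i}v_i(\pi')\|^2\le L^2\|\pi-\pi'\|^2$. Regularizer. $\psi:\mathcal X_i\to\mathbb R$ is differentiable on $\mathcal X_i$ and $\rho$-strongly convex with respect to $\|\cdot\|$.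 Bregman divergence: $D_\psi(x,y)=\psi(x)-\psi(y)-\langle\nabla\psi(y),x-y\rangle$, and $D_\psi(\pi,\pi')=\sum_iD_\psi(\pi_i,\pi_i')$. Perturbation. $G:\mathcal X_i\times\mathcal X_i\to[0,\infty)$ is differentiable in its first argument, with gradient $\nabla_{\pi_i}G$ in that argument. $G(\cdot,\sigma_i)$ is strictly convex with minimum value $0$ at $\sigma_i$. For $\mu>0$ and $\sigma\in\mathcal X$, $\pi^{\mu,\sigma}$ is a profile with $\pi_i^{\mu,\sigma}\in\arg\max_{\pi_i}\{v_i(\pi_i,\pi^{\mu,\sigma}_{-i})-\mu G(\pi_i,\sigma_i)\}$ for all $i$. Assumption A: for all $\sigma_i,\pi_i,\pi_i'\in\mathcal X_i$, $$\gamma D_\psi(\pi_i',\pi_i)\le G(\pi_i',\sigma_i)-G(\pi_i,\sigma_i)-\langle\nabla_{\pi_i}G(\pi_i,\sigma_i),\pi_i'-\pi_i\rangle\le\beta D_\psi(\pi_i',\pi_i).$$ MD-SP with noisy feedback: $$\pi_i^{t+1}=\arg\max_{x\in\mathcal X_i}\{\eta_t\langle\nabla_{\pi_i}v_i(\pi^t)+\xi_i^t-\mu\nabla_{\pi_i}G(\pi_i^t,\sigma_i),x\rangle-D_\psi(x,\pi_i^t)\}.$$ $\mathcal F_t$ is the sigma-algebra generated by the feedback $(\nabla_{\pi_i}v_i(\pi^s)+\xi_i^s)_{i}$ for $s<t$. Assumption B: $\mathbb E[\xi_i^t\mid\mathcal F_t]=0$ and $\mathbb E[\|\xi_i^t\|^2\mid\mathcal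 F_t]\le C^2$ for all $i,t$. *)

theory Defs
  imports "HOL-Analysis.Analysis" "HOL-Probability.Probability"
begin

definition strict_convex_on' :: "'a::real_vector set \<Rightarrow> ('a \<Rightarrow> real) \<Rightarrow> bool" where
  "strict_convex_on' S f \<longleftrightarrow> convex S \<and>
     (\<forall>x\<in>S. \<forall>y\<in>S. \<forall>t::real. x \<noteq> y \<and> 0 < t \<and> t < 1 \<longrightarrow>
        f ((1 - t) *\<^sub>R x + t *\<^sub>R y) < (1 - t) * f x + t * f y)"

definition strongly_convex_on :: "'a::real_normed_vector set \<Rightarrow> real \<Rightarrow> ('a \<Rightarrow> real) \<Rightarrow> bool" where
  "strongly_convex_on S \<rho> f \<longleftrightarrow> convex S \<and>
     (\<forall>x\<in>S. \<forall>y\<in>S. \<forall>t::real. 0 \<le> t \<and> t \<le> 1 \<longrightarrow>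
        f ((1 - t) *\<^sub>R x + t *\<^sub>R y)
          \<le> (1 - t) * f x + t * f y - \<rho> / 2 * t * (1 - t) * (norm (x - y))\<^sup>2)"

definition bregman :: "('a::real_inner \<Rightarrow> real) \<Rightarrow> ('a \<Rightarrow> 'a) \<Rightarrow> 'a \<Rightarrow> 'a \<Rightarrow> real" where
  "bregman psi dpsi x y = psi x - psi y - inner (dpsi y) (x - y)"

definition bregman_prof :: "('a::real_inner \<Rightarrow> real) \<Rightarrow> ('a \<Rightarrow> 'a) \<Rightarrow> 'a^'n::finite \<Rightarrow> 'a^'n \<Rightarrow> real" where
  "bregman_prof psi dpsi p q = (\<Sum>i\<in>UNIV. bregman psi dpsi (p $ i) (q $ i))"

definition upd :: "'a^'n::finite \<Rightarrow> 'n \<Rightarrow> 'a \<Rightarrow> 'a^'n" where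
  "upd p i x = (\<chi> j. if j = i then x else p $ j)"

definition profiles :: "('n::finite \<Rightarrow> 'a set) \<Rightarrow> ('a^'n) set" where
  "profiles X = {p. \<forall>i. p $ i \<in> X i}"

definition feedback_filtration ::
  "'b measure \<Rightarrow> ('n \<Rightarrow> nat \<Rightarrow> 'b \<Rightarrow> 'a::euclidean_space) \<Rightarrow> nat \<Rightarrow> 'b measure" where
  "feedback_filtration M fb t =
     sigma (space M) {fb i s -` A \<inter> space M | i s A. s < t \<and> A \<in> sets borel}"

end

theory Submission
  imports Defs
begin

(* For the step size eta_t, comparing the mirror step with the first-order optimality conditions
   of the perturbed equilibrium, and using monotonicity, L-smoothness (through Young's inequality)
   and both sides of Assumption A, gives the one-step inequality
     D(t+1) <= (1 - kappa eta_t) D(t) + eta_t <xi_t, pi_t - pi_mu> + eta_t^2 / rho |xi_t|^2.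
   The iterates are measurable functions of the past feedback (each step has a unique maximiser by
   strong convexity), so the cross term has mean zero and the squared noise has mean at most N C^2.
   With eta_t = 1 / (kappa t + 2 theta), multiplying by kappa t + 2 theta telescopes the recursion;
   the remaining sum of step sizes is bounded by a logarithm. *)

section \<open>Convexity and Bregman divergences\<close>

lemma convex_directional_quotient_tendsto:
  fixes f :: "'a::real_normed_vector \<Rightarrow> real"
  assumes df: "(f has_derivative f') (at a within S)" and "convex S" "a \<in> S" "x \<in> S"
  shows "((\<lambda>t. (f (a + t *\<^sub>R (x - a)) - f a) / t) \<longlongrightarrow> f' (x - a)) (at_right 0)"
proof -
  let ?p = "\<lambda>t. a + t *\<^sub>R (x - a)"
  have segment: "?p ` {0..1} \<subseteq> S"
  proof (clarsimp)
    fix t :: real assume "0 \<le> t" "t \<le> 1"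
    then have "(1 - t) *\<^sub>R a + t *\<^sub>R x \<in> S" using assms(2-4) by (intro convexD_alt) auto
    then show "a + t *\<^sub>R (x - a) \<in> S" by (simp add: algebra_simps)
  qed
  have "(?p has_derivative (\<lambda>t. t *\<^sub>R (x - a))) (at 0 within {0..1})"
    by (auto intro!: derivative_eq_intros)
  moreover have "(f has_derivative f') (at (?p 0) within ?p ` {0..1})"
    using has_derivative_subset[OF df segment] by simp
  ultimately have "((\<lambda>t. f (?p t)) has_derivative (\<lambda>t. f' (t *\<^sub>R (x - a)))) (at 0 within {0..1})"
    by (rule has_derivative_in_compose[unfolded o_def])
  moreover have "linear f'" using df has_derivative_linear by blast
  ultimately have "((\<lambda>t. f (?p t)) has_derivative (\<lambda>t. t * f' (x - a))) (at 0 within {0..1})"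
    by (simp add: linear_scale)
  then have "((\<lambda>t. f (?p t)) has_real_derivative f' (x - a)) (at 0 within {0..1})"
    by (simp add: has_field_derivative_def mult.commute[of _ "f' (x - a)"])
  then show ?thesis
    by (simp add: has_field_derivative_iff at_within_Icc_at_right)
qed

lemma has_derivative_max_on_convex_nonpos:
  fixes f :: "'a::real_normed_vector \<Rightarrow> real"
  assumes df: "(f has_derivative f') (at a within S)" and S: "convex S" "a \<in> S" "x \<in> S"
    and max: "\<And>z. z \<in> S \<Longrightarrow> f z \<le> f a"
  shows "f' (x - a) \<le> 0"
proof (rule tendsto_upperbound[OF convex_directional_quotient_tendsto[OF df S]])
  have "(f (a + t *\<^sub>R (x - a)) - f a) / t \<le> 0" if "0 < t" "t < 1" for t :: real
  proof -
    have "a + t *\<^sub>R (x - a) \<in> S"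
      using convexD_alt[OF S, of t] that by (simp add: algebra_simps)
    then show ?thesis using max that by (simp add: divide_nonpos_pos)
  qed
  then show "\<forall>\<^sub>F t in at_right 0. (f (a + t *\<^sub>R (x - a)) - f a) / t \<le> 0"
    unfolding eventually_at_right_field by (intro exI[of _ 1]) auto
qed (rule trivial_limit_at_right_real)

lemma bregman_ge_strongly_convex:
  fixes psi :: "'a::real_inner \<Rightarrow> real"
  assumes sc: "strongly_convex_on S \<rho> psi"
    and df: "(psi has_derivative (\<lambda>h. inner (dpsi y) h)) (at y within S)"
    and "x \<in> S" "y \<in> S"
  shows "\<rho> / 2 * (norm (x - y))\<^sup>2 \<le> bregman psi dpsi x y"
proof -
  have S: "convex S" using sc unfolding strongly_convex_on_def by simp
  let ?g = "\<lambda>t::real. psi x - psi y - \<rho> / 2 * (1 - t) * (norm (x - y))\<^sup>2"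
  have "(psi (y + t *\<^sub>R (x - y)) - psi y) / t \<le> ?g t" if t: "0 < t" "t < 1" for t
  proof -
    have "psi ((1 - t) *\<^sub>R y + t *\<^sub>R x)
        \<le> (1 - t) * psi y + t * psi x - \<rho> / 2 * t * (1 - t) * (norm (y - x))\<^sup>2"
      using sc assms(3,4) t unfolding strongly_convex_on_def by auto
    then have "psi (y + t *\<^sub>R (x - y)) - psi y \<le> t * ?g t"
      by (simp add: norm_minus_commute algebra_simps)
    then show ?thesis using t by (simp add: divide_le_eq mult.commute)
  qed
  then have "\<forall>\<^sub>F t in at_right 0. (psi (y + t *\<^sub>R (x - y)) - psi y) / t \<le> ?g t"
    unfolding eventually_at_right_field by (intro exI[of _ 1]) auto
  moreover have "(?g \<longlongrightarrow> ?g 0) (at_right 0)" by (intro tendsto_intros)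
  ultimately have "inner (dpsi y) (x - y) \<le> ?g 0"
    using tendsto_le[OF trivial_limit_at_right_real _
        convex_directional_quotient_tendsto[OF df S assms(4,3)]] by blast
  then show ?thesis unfolding bregman_def by simp
qed

text \<open>The midpoint of two distinct maximisers would do strictly better.\<close>
lemma strongly_convex_linear_argmax_unique:
  fixes psi :: "'a::real_inner \<Rightarrow> real"
  assumes sc: "strongly_convex_on S \<rho> psi" and "\<rho> > 0" and w: "w \<in> S" and x: "x \<in> S"
    and max: "\<And>z. z \<in> S \<Longrightarrow> inner a z - psi z \<le> inner a x - psi x"
    and eq: "inner a w - psi w = inner a x - psi x"
  shows "w = x"
proof (rule ccontr)
  assume "w \<noteq> x"
  define m where "m = (1 - 1/2) *\<^sub>R w + (1/2::real) *\<^sub>R x"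
  have "m \<in> S"
    using sc w x unfolding strongly_convex_on_def m_def by (intro convexD_alt) auto
  then have "inner a m - psi m \<le> inner a x - psi x" by (rule max)
  moreover have "psi m \<le> psi w / 2 + psi x / 2 - \<rho> * (norm (w - x))\<^sup>2 / 8"
  proof -
    have "\<forall>x\<in>S. \<forall>y\<in>S. \<forall>t::real. 0 \<le> t \<and> t \<le> 1 \<longrightarrow> psi ((1 - t) *\<^sub>R x + t *\<^sub>R y)
        \<le> (1 - t) * psi x + t * psi y - \<rho> / 2 * t * (1 - t) * (norm (x - y))\<^sup>2"
      using sc unfolding strongly_convex_on_def by blast
    from this[rule_format, OF w x, of "1/2"] show ?thesis unfolding m_def by simp
  qed
  moreover have "inner a m = inner a w / 2 + inner a x / 2"
    unfolding m_def by (simp add: inner_add_right)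
  moreover have "0 < \<rho> * (norm (w - x))\<^sup>2 / 8" using \<open>\<rho> > 0\<close> \<open>w \<noteq> x\<close> by simp
  ultimately show False using eq by linarith
qed

lemma bregman_three_point:
  "inner (dpsi y - dpsi x) (p - x) = bregman psi dpsi p x + bregman psi dpsi x y - bregman psi dpsi p y"
  unfolding bregman_def by (simp add: inner_diff_left inner_diff_right algebra_simps)

lemma inner_le_Young:
  fixes a b :: "'a::real_inner"
  assumes c: "c > 0"
  shows "inner a b \<le> (norm a)\<^sup>2 / (4 * c) + c * (norm b)\<^sup>2"
proof -
  have "4 * c * (norm a * norm b) \<le> (norm a)\<^sup>2 + 4 * c\<^sup>2 * (norm b)\<^sup>2"
    using zero_le_power2[of "norm a - 2 * c * norm b"] by (simp add: power2_eq_square algebra_simps)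
  then have "norm a * norm b \<le> (norm a)\<^sup>2 / (4 * c) + c * (norm b)\<^sup>2"
    using c by (simp add: field_simps power2_eq_square)
  then show ?thesis using norm_cauchy_schwarz[of a b] by linarith
qed

lemma norm_vec_power2: "(norm (z :: 'a::real_normed_vector ^'n::finite))\<^sup>2 = (\<Sum>i\<in>UNIV. (norm (z $ i))\<^sup>2)"
  unfolding norm_vec_def L2_set_def by (simp add: sum_nonneg)

lemma bregman_prof_nonneg:
  assumes "\<And>i. strongly_convex_on (X i) \<rho> psi" "\<rho> \<ge> 0"
    and "\<And>i z. z \<in> X i \<Longrightarrow> (psi has_derivative (\<lambda>h. inner (dpsi z) h)) (at z within X i)"
    and "p \<in> profiles X" "q \<in> profiles X"
  shows "0 \<le> bregman_prof psi dpsi p q"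
  unfolding bregman_prof_def
proof (rule sum_nonneg)
  fix i
  have "p $ i \<in> X i" "q $ i \<in> X i" using assms(4,5) unfolding profiles_def by auto
  then have "\<rho> / 2 * (norm (p $ i - q $ i))\<^sup>2 \<le> bregman psi dpsi (p $ i) (q $ i)"
    by (intro bregman_ge_strongly_convex[where dpsi=dpsi, OF assms(1) assms(3)])
  moreover have "0 \<le> \<rho> / 2 * (norm (p $ i - q $ i))\<^sup>2" using assms(2) by simp
  ultimately show "0 \<le> bregman psi dpsi (p $ i) (q $ i)" by linarith
qed

section \<open>The one-step inequality\<close>

lemma md_sp_player_descent:
  fixes y x p s gy gp e :: "'a::real_inner"
  assumes A: "\<And>a b. a \<in> S \<Longrightarrow> b \<in> S \<Longrightarrow>
        \<gamma> * bregman psi dpsi b a \<le> G b s - G a s - inner (dG a s) (b - a)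
        \<and> G b s - G a s - inner (dG a s) (b - a) \<le> \<beta> * bregman psi dpsi b a"
    and S: "y \<in> S" "x \<in> S" "p \<in> S"
    and D_nonneg: "0 \<le> bregman psi dpsi x p"
    and opt_x: "inner (\<eta> *\<^sub>R (gy + e - \<mu> *\<^sub>R dG y s) - dpsi x + dpsi y) (p - x) \<le> 0"
    and opt_p: "inner (gp - \<mu> *\<^sub>R dG p s) (x - p) \<le> 0"
    and pos: "\<eta> > 0" "\<rho> > 0" "\<mu> \<ge> 0" "\<gamma> \<ge> 0" "c > 0"
  shows "bregman psi dpsi p x \<le> (1 - \<eta> * \<mu> * \<gamma>) * bregman psi dpsi p y
      - (1 - \<eta> * \<mu> * \<beta>) * bregman psi dpsi x y
      + \<eta> * inner (gy - gp) (y - p) + \<eta> / (4 * c) * (norm (gy - gp))\<^sup>2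
      + (\<eta> * c + \<rho> / 4) * (norm (x - y))\<^sup>2
      + \<eta> * inner e (y - p) + \<eta>\<^sup>2 / \<rho> * (norm e)\<^sup>2"
proof -
  let ?D = "bregman psi dpsi" and ?g = "gy + e - \<mu> *\<^sub>R dG y s"
  let ?GB = "\<lambda>b a. G b s - G a s - inner (dG a s) (b - a)"
  have descent: "?D p x \<le> ?D p y - ?D x y + \<eta> * inner ?g (x - p)"
    using opt_x bregman_three_point[of dpsi y x p psi]
    by (simp add: inner_diff_left inner_add_left inner_diff_right algebra_simps)
  \<comment> \<open>the perturbation terms telescope into three instances of Assumption A\<close>
  have perturbation: "- \<mu> * inner (dG y s - dG p s) (x - p) \<le> \<mu> * \<beta> * ?D x y - \<mu> * \<gamma> * ?D p y"
  proof -
    have "- \<mu> * inner (dG y s - dG p s) (x - p) = \<mu> * (?GB x y - ?GB x p - ?GB p y)"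
      by (simp add: inner_diff_left inner_diff_right algebra_simps)
    also have "\<dots> \<le> \<mu> * (\<beta> * ?D x y - \<gamma> * ?D x p - \<gamma> * ?D p y)"
      using A[OF S(1,2)] A[OF S(3,2)] A[OF S(1,3)] pos(3) by (intro mult_left_mono) auto
    also have "\<dots> \<le> \<mu> * \<beta> * ?D x y - \<mu> * \<gamma> * ?D p y"
      using D_nonneg pos(3,4) by (simp add: algebra_simps)
    finally show ?thesis .
  qed
  have young_grad: "inner (gy - gp) (x - y) \<le> (norm (gy - gp))\<^sup>2 / (4 * c) + c * (norm (x - y))\<^sup>2"
    using inner_le_Young[OF pos(5)] .
  have young_noise: "\<eta> * inner e (x - y) \<le> \<eta>\<^sup>2 / \<rho> * (norm e)\<^sup>2 + \<rho> / 4 * (norm (x - y))\<^sup>2"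
  proof -
    have "\<eta> * inner e (x - y) \<le> \<eta> * ((norm e)\<^sup>2 / (4 * (\<rho> / (4 * \<eta>))) + \<rho> / (4 * \<eta>) * (norm (x - y))\<^sup>2)"
      using inner_le_Young[of "\<rho> / (4 * \<eta>)" e "x - y"] pos by (intro mult_left_mono) auto
    also have "\<dots> = \<eta>\<^sup>2 / \<rho> * (norm e)\<^sup>2 + \<rho> / 4 * (norm (x - y))\<^sup>2"
      using pos by (simp add: field_simps power2_eq_square)
    finally show ?thesis .
  qed
  have "inner ?g (x - p) = inner (gy - gp) (y - p) + inner (gy - gp) (x - y)
      + inner (gp - \<mu> *\<^sub>R dG p s) (x - p) - \<mu> * inner (dG y s - dG p s) (x - p)
      + inner e (y - p) + inner e (x - y)"
    by (simp add: inner_diff_left inner_diff_right inner_add_left inner_add_right algebra_simps)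
  then have "\<eta> * inner ?g (x - p) \<le> \<eta> * (inner (gy - gp) (y - p)
      + ((norm (gy - gp))\<^sup>2 / (4 * c) + c * (norm (x - y))\<^sup>2)
      + (\<mu> * \<beta> * ?D x y - \<mu> * \<gamma> * ?D p y) + inner e (y - p)) + \<eta> * inner e (x - y)"
    using opt_p perturbation young_grad pos(1) by (simp add: distrib_left[symmetric] mult_left_mono)
  then show ?thesis using descent young_noise by (simp add: algebra_simps)
qed

lemma md_sp_descent_constants:
  fixes \<eta> \<mu> \<beta> \<gamma> \<rho> L :: real
  assumes pos: "\<eta> > 0" "\<rho> > 0" "\<mu> > 0" "\<beta> \<ge> 0" "\<gamma> > 0"
    and eta_le: "\<eta> * (\<mu> * (\<gamma> + 2 * \<beta>) + 8 * L\<^sup>2 / (\<mu> * \<gamma> * \<rho>\<^sup>2)) \<le> 1"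
  defines "c \<equiv> \<rho> / (4 * \<eta>) - \<mu> * \<beta> * \<rho> / 2"
  shows "c > 0" and "\<eta> * \<mu> * \<beta> \<le> 1" and "\<eta> * c + \<rho> / 4 = (1 - \<eta> * \<mu> * \<beta>) * (\<rho> / 2)"
    and "\<eta> / (4 * c) * L\<^sup>2 \<le> \<eta> * (\<mu> * \<gamma> / 2) * (\<rho> / 2)"
proof -
  have L_term: "0 \<le> \<eta> * (8 * L\<^sup>2 / (\<mu> * \<gamma> * \<rho>\<^sup>2))" using pos by simp
  have "\<eta> * \<mu> * \<gamma> > 0" using pos by simp
  then have small: "\<eta> * (8 * L\<^sup>2 / (\<mu> * \<gamma> * \<rho>\<^sup>2)) \<le> 1 - 2 * (\<eta> * \<mu> * \<beta>)"
    and lt: "2 * (\<eta> * \<mu> * \<beta>) < 1"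
    using eta_le L_term by (simp_all add: algebra_simps)
  have c4: "4 * c = \<rho> * (1 - 2 * (\<eta> * \<mu> * \<beta>)) / \<eta>"
    unfolding c_def using pos by (simp add: field_simps)
  have "0 < \<rho> * (1 - 2 * (\<eta> * \<mu> * \<beta>)) / \<eta>" using lt pos by simp
  then show "c > 0" using c4 by simp
  show "\<eta> * \<mu> * \<beta> \<le> 1" using lt by simp
  show "\<eta> * c + \<rho> / 4 = (1 - \<eta> * \<mu> * \<beta>) * (\<rho> / 2)"
    unfolding c_def using pos by (simp add: field_simps)
  have "\<eta> * (8 * L\<^sup>2) \<le> (1 - 2 * (\<eta> * \<mu> * \<beta>)) * (\<mu> * \<gamma> * \<rho>\<^sup>2)"
    using small pos by (simp add: field_simps)
  moreover have "0 \<le> (1 - 2 * (\<eta> * \<mu> * \<beta>)) * (\<mu> * \<gamma> * \<rho>\<^sup>2)" using lt pos by simp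
  ultimately have "\<eta> * L\<^sup>2 \<le> (1 - 2 * (\<eta> * \<mu> * \<beta>)) * (\<mu> * \<gamma> * \<rho>\<^sup>2) / 4" by simp
  then have bound: "\<eta> * (\<eta> * L\<^sup>2) / (\<rho> * (1 - 2 * (\<eta> * \<mu> * \<beta>)))
      \<le> \<eta> * ((1 - 2 * (\<eta> * \<mu> * \<beta>)) * (\<mu> * \<gamma> * \<rho>\<^sup>2) / 4) / (\<rho> * (1 - 2 * (\<eta> * \<mu> * \<beta>)))"
    using pos lt by (intro divide_right_mono mult_left_mono) auto
  have "\<eta> / (4 * c) * L\<^sup>2 = \<eta> * (\<eta> * L\<^sup>2) / (\<rho> * (1 - 2 * (\<eta> * \<mu> * \<beta>)))"
    unfolding c4 using pos lt by (simp add: field_simps)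
  also note bound
  also have "\<eta> * ((1 - 2 * (\<eta> * \<mu> * \<beta>)) * (\<mu> * \<gamma> * \<rho>\<^sup>2) / 4) / (\<rho> * (1 - 2 * (\<eta> * \<mu> * \<beta>)))
      = \<eta> * (\<mu> * \<gamma> / 2) * (\<rho> / 2)"
    using pos lt by (simp add: field_simps power2_eq_square)
  finally show "\<eta> / (4 * c) * L\<^sup>2 \<le> \<eta> * (\<mu> * \<gamma> / 2) * (\<rho> / 2)" .
qed

lemma md_sp_descent_of_optimality:
  fixes X :: "'n::finite \<Rightarrow> 'a::real_inner set" and dv :: "'n \<Rightarrow> 'a^'n \<Rightarrow> 'a"
    and \<sigma> p y x :: "'a^'n" and e :: "'n \<Rightarrow> 'a"
  assumes prof: "y \<in> profiles X" "x \<in> profiles X" "p \<in> profiles X"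
    and D_lb: "\<And>i a b. a \<in> X i \<Longrightarrow> b \<in> X i \<Longrightarrow> \<rho> / 2 * (norm (a - b))\<^sup>2 \<le> bregman psi dpsi a b"
    and A: "\<And>i a b. a \<in> X i \<Longrightarrow> b \<in> X i \<Longrightarrow>
        \<gamma> * bregman psi dpsi b a \<le> G b (\<sigma> $ i) - G a (\<sigma> $ i) - inner (dG a (\<sigma> $ i)) (b - a)
        \<and> G b (\<sigma> $ i) - G a (\<sigma> $ i) - inner (dG a (\<sigma> $ i)) (b - a) \<le> \<beta> * bregman psi dpsi b a"
    and opt_x: "\<And>i. inner (\<eta> *\<^sub>R (dv i y + e i - \<mu> *\<^sub>R dG (y $ i) (\<sigma> $ i))
        - dpsi (x $ i) + dpsi (y $ i)) (p $ i - x $ i) \<le> 0"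
    and opt_p: "\<And>i. inner (dv i p - \<mu> *\<^sub>R dG (p $ i) (\<sigma> $ i)) (x $ i - p $ i) \<le> 0"
    and monotone: "(\<Sum>i\<in>UNIV. inner (dv i y - dv i p) (y $ i - p $ i)) \<le> 0"
    and smooth: "(\<Sum>i\<in>UNIV. (norm (dv i y - dv i p))\<^sup>2) \<le> L\<^sup>2 * (norm (y - p))\<^sup>2"
    and pos: "\<eta> > 0" "\<rho> > 0" "\<mu> > 0" "\<beta> \<ge> 0" "\<gamma> > 0"
    and eta_le: "\<eta> * (\<mu> * (\<gamma> + 2 * \<beta>) + 8 * L\<^sup>2 / (\<mu> * \<gamma> * \<rho>\<^sup>2)) \<le> 1"
  shows "bregman_prof psi dpsi p x \<le> (1 - \<eta> * (\<mu> * \<gamma> / 2)) * bregman_prof psi dpsi p y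
     + \<eta> * (\<Sum>i\<in>UNIV. inner (e i) (y $ i - p $ i)) + \<eta>\<^sup>2 / \<rho> * (\<Sum>i\<in>UNIV. (norm (e i))\<^sup>2)"
proof -
  let ?D = "bregman psi dpsi"
  define c where "c = \<rho> / (4 * \<eta>) - \<mu> * \<beta> * \<rho> / 2"
  note const = md_sp_descent_constants[OF pos eta_le, folded c_def]
  have in_X: "y $ i \<in> X i" "x $ i \<in> X i" "p $ i \<in> X i" for i
    using prof unfolding profiles_def by auto
  have player: "?D (p $ i) (x $ i) \<le> (1 - \<eta> * \<mu> * \<gamma>) * ?D (p $ i) (y $ i)
      + \<eta> * inner (dv i y - dv i p) (y $ i - p $ i) + \<eta> / (4 * c) * (norm (dv i y - dv i p))\<^sup>2
      + \<eta> * inner (e i) (y $ i - p $ i) + \<eta>\<^sup>2 / \<rho> * (norm (e i))\<^sup>2" for i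
  proof -
    have "0 \<le> \<rho> / 2 * (norm (x $ i - p $ i))\<^sup>2" using pos by simp
    then have "0 \<le> ?D (x $ i) (p $ i)" using D_lb[OF in_X(2,3)] by (rule order_trans)
    note step = md_sp_player_descent[where G=G and dG=dG and psi=psi and dpsi=dpsi and s="\<sigma> $ i",
        OF A[where i=i] in_X[of i] this opt_x[of i] opt_p[of i] pos(1,2)
        less_imp_le[OF pos(3)] less_imp_le[OF pos(5)] const(1)]
    \<comment> \<open>the choice of c lets strong convexity absorb the distance between consecutive iterates\<close>
    have "(1 - \<eta> * \<mu> * \<beta>) * (\<rho> / 2 * (norm (x $ i - y $ i))\<^sup>2) \<le> (1 - \<eta> * \<mu> * \<beta>) * ?D (x $ i) (y $ i)"
      using D_lb[OF in_X(2,1)] const(2) by (intro mult_left_mono) auto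
    moreover have "(\<eta> * c + \<rho> / 4) * (norm (x $ i - y $ i))\<^sup>2
        = (1 - \<eta> * \<mu> * \<beta>) * (\<rho> / 2 * (norm (x $ i - y $ i))\<^sup>2)"
      using const(3) by simp
    ultimately show ?thesis using step by linarith
  qed
  have grad_term: "\<eta> / (4 * c) * (\<Sum>i\<in>UNIV. (norm (dv i y - dv i p))\<^sup>2)
      \<le> \<eta> * (\<mu> * \<gamma> / 2) * (\<Sum>i\<in>UNIV. ?D (p $ i) (y $ i))"
  proof -
    have "\<eta> / (4 * c) * (\<Sum>i\<in>UNIV. (norm (dv i y - dv i p))\<^sup>2) \<le> \<eta> / (4 * c) * L\<^sup>2 * (norm (y - p))\<^sup>2"
      using mult_left_mono[OF smooth, of "\<eta> / (4 * c)"] pos const(1) by (simp add: mult.assoc)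
    also have "\<dots> \<le> \<eta> * (\<mu> * \<gamma> / 2) * (\<rho> / 2 * (norm (y - p))\<^sup>2)"
      using mult_right_mono[OF const(4) zero_le_power2[of "norm (y - p)"]] by simp
    also have "\<rho> / 2 * (norm (y - p))\<^sup>2 \<le> (\<Sum>i\<in>UNIV. ?D (p $ i) (y $ i))"
      unfolding norm_vec_power2 sum_distrib_left
      using D_lb[OF in_X(3,1)] by (intro sum_mono) (simp add: norm_minus_commute vector_minus_component)
    then have "\<eta> * (\<mu> * \<gamma> / 2) * (\<rho> / 2 * (norm (y - p))\<^sup>2) \<le> \<eta> * (\<mu> * \<gamma> / 2) * (\<Sum>i\<in>UNIV. ?D (p $ i) (y $ i))"
      using pos by (intro mult_left_mono) auto
    finally show ?thesis .
  qed
  have "bregman_prof psi dpsi p x \<le> (1 - \<eta> * \<mu> * \<gamma>) * (\<Sum>i\<in>UNIV. ?D (p $ i) (y $ i))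
      + \<eta> * (\<Sum>i\<in>UNIV. inner (dv i y - dv i p) (y $ i - p $ i))
      + \<eta> / (4 * c) * (\<Sum>i\<in>UNIV. (norm (dv i y - dv i p))\<^sup>2)
      + \<eta> * (\<Sum>i\<in>UNIV. inner (e i) (y $ i - p $ i)) + \<eta>\<^sup>2 / \<rho> * (\<Sum>i\<in>UNIV. (norm (e i))\<^sup>2)"
    unfolding bregman_prof_def using sum_mono[of UNIV, OF player]
    by (simp add: sum.distrib sum_distrib_left)
  moreover have "\<eta> * (\<Sum>i\<in>UNIV. inner (dv i y - dv i p) (y $ i - p $ i)) \<le> 0"
    using monotone pos by (simp add: mult_nonneg_nonpos)
  ultimately show ?thesis using grad_term unfolding bregman_prof_def by (simp add: algebra_simps)
qed

lemma md_sp_descent: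
  fixes X :: "'n::finite \<Rightarrow> 'a::real_inner set" and v :: "'n \<Rightarrow> 'a^'n \<Rightarrow> real"
    and dv :: "'n \<Rightarrow> 'a^'n \<Rightarrow> 'a" and \<sigma> p y x :: "'a^'n" and e :: "'n \<Rightarrow> 'a"
  assumes X: "\<And>i. convex (X i)" and prof: "y \<in> profiles X" "p \<in> profiles X"
    and v_grad: "\<And>i. ((\<lambda>z. v i (upd p i z)) has_derivative (\<lambda>h. inner (dv i p) h)) (at (p $ i) within X i)"
    and equilibrium: "\<And>i z. z \<in> X i \<Longrightarrow>
        v i (upd p i z) - \<mu> * G z (\<sigma> $ i) \<le> v i p - \<mu> * G (p $ i) (\<sigma> $ i)"
    and psi_grad: "\<And>i z. z \<in> X i \<Longrightarrow> (psi has_derivative (\<lambda>h. inner (dpsi z) h)) (at z within X i)"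
    and psi_sc: "\<And>i. strongly_convex_on (X i) \<rho> psi"
    and G_grad: "\<And>i z. z \<in> X i \<Longrightarrow>
        ((\<lambda>w. G w (\<sigma> $ i)) has_derivative (\<lambda>h. inner (dG z (\<sigma> $ i)) h)) (at z within X i)"
    and A: "\<And>i a b. a \<in> X i \<Longrightarrow> b \<in> X i \<Longrightarrow>
        \<gamma> * bregman psi dpsi b a \<le> G b (\<sigma> $ i) - G a (\<sigma> $ i) - inner (dG a (\<sigma> $ i)) (b - a)
        \<and> G b (\<sigma> $ i) - G a (\<sigma> $ i) - inner (dG a (\<sigma> $ i)) (b - a) \<le> \<beta> * bregman psi dpsi b a"
    and monotone: "(\<Sum>i\<in>UNIV. inner (dv i y - dv i p) (y $ i - p $ i)) \<le> 0"
    and smooth: "(\<Sum>i\<in>UNIV. (norm (dv i y - dv i p))\<^sup>2) \<le> L\<^sup>2 * (norm (y - p))\<^sup>2"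
    and step: "\<And>i. x $ i \<in> X i \<and> (\<forall>z\<in>X i.
        \<eta> * inner (dv i y + e i - \<mu> *\<^sub>R dG (y $ i) (\<sigma> $ i)) z - bregman psi dpsi z (y $ i)
        \<le> \<eta> * inner (dv i y + e i - \<mu> *\<^sub>R dG (y $ i) (\<sigma> $ i)) (x $ i) - bregman psi dpsi (x $ i) (y $ i))"
    and pos: "\<eta> > 0" "\<rho> > 0" "\<mu> > 0" "\<beta> \<ge> 0" "\<gamma> > 0"
    and eta_le: "\<eta> * (\<mu> * (\<gamma> + 2 * \<beta>) + 8 * L\<^sup>2 / (\<mu> * \<gamma> * \<rho>\<^sup>2)) \<le> 1"
  shows "bregman_prof psi dpsi p x \<le> (1 - \<eta> * (\<mu> * \<gamma> / 2)) * bregman_prof psi dpsi p y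
     + \<eta> * (\<Sum>i\<in>UNIV. inner (e i) (y $ i - p $ i)) + \<eta>\<^sup>2 / \<rho> * (\<Sum>i\<in>UNIV. (norm (e i))\<^sup>2)"
proof (rule md_sp_descent_of_optimality[where G=G and dG=dG and psi=psi and dpsi=dpsi and dv=dv and \<sigma>=\<sigma>,
      OF prof(1) _ prof(2) _ A _ _ monotone smooth pos eta_le])
  have in_X: "y $ i \<in> X i" "x $ i \<in> X i" "p $ i \<in> X i" for i
    using prof step unfolding profiles_def by auto
  then show "x \<in> profiles X" unfolding profiles_def by blast
  show "\<rho> / 2 * (norm (a - b))\<^sup>2 \<le> bregman psi dpsi a b" if "a \<in> X i" "b \<in> X i" for i a b
    by (rule bregman_ge_strongly_convex[where dpsi=dpsi, OF psi_sc psi_grad[OF that(2)] that])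
  show "inner (\<eta> *\<^sub>R (dv i y + e i - \<mu> *\<^sub>R dG (y $ i) (\<sigma> $ i)) - dpsi (x $ i) + dpsi (y $ i))
      (p $ i - x $ i) \<le> 0" for i
  proof -
    let ?g = "dv i y + e i - \<mu> *\<^sub>R dG (y $ i) (\<sigma> $ i)"
    have "((\<lambda>z. \<eta> * inner ?g z - bregman psi dpsi z (y $ i)) has_derivative
        (\<lambda>h. \<eta> * inner ?g h - (inner (dpsi (x $ i)) h - inner (dpsi (y $ i)) h))) (at (x $ i) within X i)"
      unfolding bregman_def
      by (rule derivative_eq_intros psi_grad[OF in_X(2)] refl | simp add: inner_diff_right)+
    from has_derivative_max_on_convex_nonpos[OF this X in_X(2,3) step[THEN conjunct2, rule_format]]
    show ?thesis by (simp add: inner_diff_left inner_add_left)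
  qed
  show "inner (dv i p - \<mu> *\<^sub>R dG (p $ i) (\<sigma> $ i)) (x $ i - p $ i) \<le> 0" for i
  proof -
    have "upd p i (p $ i) = p" unfolding upd_def by (simp add: vec_eq_iff)
    then have max: "v i (upd p i z) - \<mu> * G z (\<sigma> $ i) \<le> v i (upd p i (p $ i)) - \<mu> * G (p $ i) (\<sigma> $ i)"
      if "z \<in> X i" for z
      using equilibrium[OF that] by simp
    have "((\<lambda>z. v i (upd p i z) - \<mu> * G z (\<sigma> $ i)) has_derivative
        (\<lambda>h. inner (dv i p) h - \<mu> * inner (dG (p $ i) (\<sigma> $ i)) h)) (at (p $ i) within X i)"
      by (intro has_derivative_diff has_derivative_mult_right v_grad G_grad[OF in_X(3)])
    from has_derivative_max_on_convex_nonpos[OF this X in_X(3,2) max]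
    show ?thesis by (simp add: inner_diff_left)
  qed
qed

section \<open>Step sizes and the unrolled recursion\<close>

lemma md_sp_step_size_bounds:
  fixes \<mu> \<gamma> \<rho> \<beta> L theta kappa :: real
  assumes pos: "\<mu> > 0" "\<gamma> > 0" "\<rho> > 0" "\<beta> > 0"
    and theta_def: "theta = (\<mu>\<^sup>2 * \<gamma> * \<rho>\<^sup>2 * (\<gamma> + 2 * \<beta>) + 8 * L\<^sup>2) / (2 * \<mu> * \<gamma> * \<rho>\<^sup>2)"
    and kappa_def: "kappa = \<mu> * \<gamma> / 2"
  shows "0 < kappa" and "kappa \<le> 2 * theta"
    and "1 / (kappa * real s + 2 * theta) * (\<mu> * (\<gamma> + 2 * \<beta>) + 8 * L\<^sup>2 / (\<mu> * \<gamma> * \<rho>\<^sup>2)) \<le> 1"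
proof -
  have two_theta: "2 * theta = \<mu> * (\<gamma> + 2 * \<beta>) + 8 * L\<^sup>2 / (\<mu> * \<gamma> * \<rho>\<^sup>2)"
    unfolding theta_def using pos by (simp add: field_simps power2_eq_square)
  have "0 \<le> 8 * L\<^sup>2 / (\<mu> * \<gamma> * \<rho>\<^sup>2)" using pos by simp
  moreover have "kappa < \<mu> * (\<gamma> + 2 * \<beta>)"
    unfolding kappa_def using pos by (simp add: field_simps add_pos_pos)
  ultimately show "kappa \<le> 2 * theta" unfolding two_theta by linarith
  show "0 < kappa" unfolding kappa_def using pos by simp
  then have "0 \<le> kappa * real s" by simp
  with \<open>0 < kappa\<close> \<open>kappa \<le> 2 * theta\<close>
  have "2 * theta \<le> kappa * real s + 2 * theta" "0 < kappa * real s + 2 * theta" by linarith+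
  then show "1 / (kappa * real s + 2 * theta) * (\<mu> * (\<gamma> + 2 * \<beta>) + 8 * L\<^sup>2 / (\<mu> * \<gamma> * \<rho>\<^sup>2)) \<le> 1"
    unfolding two_theta[symmetric] by simp
qed

lemma sum_inverse_affine_le_ln:
  fixes k c :: real
  assumes k: "k > 0" and c: "c > 0"
  shows "(\<Sum>s\<le>t. 1 / (k * real s + c)) \<le> 1 / c + 1 / k * ln (k / c * real t + 1)"
proof (induction t)
  case (Suc t)
  define a where "a = k * real (Suc t) + c"
  have a: "a > k" unfolding a_def using k c by (simp add: algebra_simps add_pos_nonneg)
  have "1 / a \<le> 1 / k * (ln a - ln (a - k))"
  proof -
    have "ln ((a - k) / a) \<le> (a - k) / a - 1" using a k by (intro ln_le_minus_one) simp
    then have "k / a \<le> ln a - ln (a - k)" using a k by (simp add: ln_div field_simps)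
    then show ?thesis using k by (simp add: field_simps)
  qed
  moreover have "k / c * real (Suc t) + 1 = a / c" and "k / c * real t + 1 = (a - k) / c"
    using c by (simp_all add: a_def field_simps)
  then have L1: "ln (k / c * real (Suc t) + 1) = ln a - ln c"
    and L2: "ln (k / c * real t + 1) = ln (a - k) - ln c"
    using a k c by (simp_all add: ln_div)
  have "1 / k * ln (k / c * real (Suc t) + 1) = 1 / k * ln (k / c * real t + 1) + 1 / k * (ln a - ln (a - k))"
    unfolding L1 L2 by (simp add: algebra_simps)
  moreover have "(\<Sum>s\<le>Suc t. 1 / (k * real s + c)) = (\<Sum>s\<le>t. 1 / (k * real s + c)) + 1 / a"
    by (simp add: a_def)
  ultimately show ?case using Suc.IH by linarith
qed simp

lemma weighted_recursion_unroll:
  fixes a b \<eta> :: "nat \<Rightarrow> real" and k c :: real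
  assumes "k \<ge> 0" "c > 0" and \<eta>: "\<And>n. \<eta> n = 1 / (k * real n + c)"
    and rec: "\<And>n. a (Suc n) \<le> (1 - \<eta> n * k) * a n + \<eta> n * b n"
  shows "(k * real n - k + c) * a n \<le> (c - k) * a 0 + (\<Sum>s<n. b s)"
proof (induction n)
  case (Suc n)
  have pos: "k * real n + c > 0" using assms(1,2) by (simp add: add_nonneg_pos)
  have "(k * real (Suc n) - k + c) * a (Suc n) = (k * real n + c) * a (Suc n)" by (simp add: algebra_simps)
  also have "\<dots> \<le> (k * real n + c) * ((1 - \<eta> n * k) * a n + \<eta> n * b n)"
    using rec pos by (intro mult_left_mono) auto
  also have "\<dots> = (k * real n - k + c) * a n + b n"
  proof -
    have "(k * real n + c) * (1 - \<eta> n * k) = k * real n - k + c" "(k * real n + c) * \<eta> n = 1"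
      using pos by (simp_all add: \<eta> field_simps)
    then show ?thesis by (simp add: distrib_left mult.assoc[symmetric])
  qed
  finally show ?case using Suc.IH by simp
qed simp

lemma nn_integral_le_of_recursion:
  fixes D Z :: "nat \<Rightarrow> 'b \<Rightarrow> real" and \<eta> :: "nat \<Rightarrow> real" and k c V d0 :: real
  assumes M: "prob_space M" and k: "k > 0" "k \<le> c" and V: "V \<ge> 0"
    and \<eta>: "\<And>n. \<eta> n = 1 / (k * real n + c)"
    and D_nonneg: "\<And>n \<omega>. \<omega> \<in> space M \<Longrightarrow> 0 \<le> D n \<omega>"
    and D0: "\<And>\<omega>. \<omega> \<in> space M \<Longrightarrow> D 0 \<omega> = d0"
    and rec: "\<And>n \<omega>. \<omega> \<in> space M \<Longrightarrow> D (Suc n) \<omega> \<le> (1 - \<eta> n * k) * D n \<omega> + \<eta> n * Z n \<omega>"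
    and Z_int: "\<And>n. integrable M (Z n)"
    and Z_mean: "\<And>n. (\<integral>\<omega>. Z n \<omega> \<partial>M) \<le> \<eta> n * V"
  shows "(\<integral>\<^sup>+\<omega>. ennreal (D (Suc t) \<omega>) \<partial>M)
    \<le> ennreal ((c - k) / (k * real t + c) * d0 + V / (k * real t + c) * (1 / k * ln (k / c * real t + 1) + 1 / c))"
proof -
  interpret prob_space M by (rule M)
  have c: "c > 0" and W: "k * real t + c > 0" using k by (auto intro: add_nonneg_pos)
  define R where "R \<omega> = ((c - k) * d0 + (\<Sum>s<Suc t. Z s \<omega>)) / (k * real t + c)" for \<omega>
  have D_le_R: "D (Suc t) \<omega> \<le> R \<omega>" if \<omega>: "\<omega> \<in> space M" for \<omega>
  proof -
    have "(k * real (Suc t) - k + c) * D (Suc t) \<omega> \<le> (c - k) * D 0 \<omega> + (\<Sum>s<Suc t. Z s \<omega>)"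
      using weighted_recursion_unroll[of k c \<eta> "\<lambda>n. D n \<omega>" "\<lambda>n. Z n \<omega>" "Suc t"] rec[OF \<omega>] \<eta> k c
      by simp
    then show ?thesis unfolding R_def D0[OF \<omega>] using W by (simp add: pos_le_divide_eq algebra_simps)
  qed
  have R_int: "integrable M R" unfolding R_def using Z_int by auto
  have "(\<integral>\<omega>. R \<omega> \<partial>M) = ((c - k) * d0 + (\<Sum>s<Suc t. \<integral>\<omega>. Z s \<omega> \<partial>M)) / (k * real t + c)"
    unfolding R_def using Z_int by (simp add: Bochner_Integration.integral_sum prob_space)
  also have "\<dots> \<le> ((c - k) * d0 + V * (\<Sum>s\<le>t. 1 / (k * real s + c))) / (k * real t + c)"
    using Z_mean W unfolding \<eta>
    by (auto simp: lessThan_Suc_atMost sum_distrib_left mult.commute intro!: divide_right_mono sum_mono)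
  also have "\<dots> \<le> ((c - k) * d0 + V * (1 / k * ln (k / c * real t + 1) + 1 / c)) / (k * real t + c)"
    using sum_inverse_affine_le_ln[OF k(1) c, of t] V W
    by (intro divide_right_mono add_left_mono mult_left_mono) (auto simp: add.commute)
  also have "\<dots> = (c - k) / (k * real t + c) * d0 + V / (k * real t + c) * (1 / k * ln (k / c * real t + 1) + 1 / c)"
    by (simp add: add_divide_distrib)
  finally have R_mean: "(\<integral>\<omega>. R \<omega> \<partial>M) \<le> \<dots>" .
  have "(\<integral>\<^sup>+\<omega>. ennreal (D (Suc t) \<omega>) \<partial>M) \<le> (\<integral>\<^sup>+\<omega>. ennreal (R \<omega>) \<partial>M)"
    using D_le_R by (intro nn_integral_mono ennreal_leI) auto
  also have "\<dots> = ennreal (\<integral>\<omega>. R \<omega> \<partial>M)"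
    using D_le_R D_nonneg by (intro nn_integral_eq_integral R_int AE_I2) (meson order_trans)
  finally show ?thesis using R_mean ennreal_leI order_trans by blast
qed

section \<open>Measurability of the iterates\<close>

lemma continuous_on_closure_approx:
  fixes f :: "'a::metric_space \<Rightarrow> real"
  assumes "continuous_on S f" "w \<in> S" "Q \<subseteq> S" "w \<in> closure Q" "e > 0"
  obtains q where "q \<in> Q" "f w - e < f q"
proof -
  obtain d where d: "d > 0" "\<And>z. z \<in> S \<Longrightarrow> dist z w < d \<Longrightarrow> dist (f z) (f w) < e"
    using assms(1,2,5) unfolding continuous_on_iff by blast
  obtain q where "q \<in> Q" "dist q w < d" using assms(4) d(1) unfolding closure_approachable by blast
  then show thesis using that d(2) assms(3) by (force simp: dist_real_def abs_less_iff)
qed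

lemma argmax_in_closed_iff:
  fixes \<Phi> :: "'a::metric_space \<Rightarrow> real"
  assumes C: "compact C" "C \<noteq> {}" "C \<subseteq> S" "QC \<subseteq> C" "C \<subseteq> closure QC"
    and QS: "QS \<subseteq> S" "S \<subseteq> closure QS"
    and cont: "continuous_on S \<Phi>" and x: "x \<in> S"
    and max: "\<And>w. w \<in> S \<Longrightarrow> \<Phi> w \<le> \<Phi> x" and uniq: "\<And>w. w \<in> S \<Longrightarrow> \<Phi> w = \<Phi> x \<Longrightarrow> w = x"
  shows "x \<in> C \<longleftrightarrow> (\<forall>n::nat. \<exists>q\<in>QC. \<forall>q'\<in>QS. \<Phi> q' \<le> \<Phi> q + 1 / Suc n)"
proof
  assume "x \<in> C"
  show "\<forall>n::nat. \<exists>q\<in>QC. \<forall>q'\<in>QS. \<Phi> q' \<le> \<Phi> q + 1 / Suc n"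
  proof
    fix n :: nat
    have "QC \<subseteq> S" "x \<in> closure QC" using C \<open>x \<in> C\<close> by auto
    then obtain q where "q \<in> QC" "\<Phi> x - 1 / Suc n < \<Phi> q"
      by (rule continuous_on_closure_approx[OF cont x]) auto
    moreover have "\<Phi> q' \<le> \<Phi> x" if "q' \<in> QS" for q' using max QS that by auto
    ultimately show "\<exists>q\<in>QC. \<forall>q'\<in>QS. \<Phi> q' \<le> \<Phi> q + 1 / Suc n" by force
  qed
next
  assume near: "\<forall>n::nat. \<exists>q\<in>QC. \<forall>q'\<in>QS. \<Phi> q' \<le> \<Phi> q + 1 / Suc n"
  show "x \<in> C"
  proof (rule ccontr)
    assume "x \<notin> C"
    obtain m where m: "m \<in> C" "\<And>z. z \<in> C \<Longrightarrow> \<Phi> z \<le> \<Phi> m"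
      using continuous_attains_sup[OF C(1,2) continuous_on_subset[OF cont C(3)]] by blast
    define \<delta> where "\<delta> = (\<Phi> x - \<Phi> m) / 2"
    have "\<delta> > 0" using max[of m] uniq[of m] m(1) C(3) \<open>x \<notin> C\<close> unfolding \<delta>_def by force
    then obtain n :: nat where n: "1 / Suc n < \<delta>"
      by (metis inverse_eq_divide reals_Archimedean)
    obtain q where q: "q \<in> QC" "\<And>q'. q' \<in> QS \<Longrightarrow> \<Phi> q' \<le> \<Phi> q + 1 / Suc n" using near by blast
    obtain q' where q': "q' \<in> QS" "\<Phi> x - \<delta> < \<Phi> q'"
      using continuous_on_closure_approx[OF cont x QS(1), of \<delta>] QS(2) x \<open>\<delta> > 0\<close> by auto
    have "\<Phi> q \<le> \<Phi> m" using m(2) q(1) C(4) by auto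
    moreover have "\<Phi> x = \<Phi> m + 2 * \<delta>" unfolding \<delta>_def by (simp add: field_simps)
    ultimately show False using q(2)[OF q'(1)] q'(2) n by linarith
  qed
qed

lemma borel_measurable_argmax:
  fixes \<Phi> :: "'b \<Rightarrow> 'a::euclidean_space \<Rightarrow> real" and x :: "'b \<Rightarrow> 'a"
  assumes S: "compact S"
    and cont: "\<And>\<omega>. \<omega> \<in> space N \<Longrightarrow> continuous_on S (\<Phi> \<omega>)"
    and meas: "\<And>w. w \<in> S \<Longrightarrow> (\<lambda>\<omega>. \<Phi> \<omega> w) \<in> borel_measurable N"
    and x: "\<And>\<omega>. \<omega> \<in> space N \<Longrightarrow> x \<omega> \<in> S"
    and max: "\<And>\<omega> w. \<omega> \<in> space N \<Longrightarrow> w \<in> S \<Longrightarrow> \<Phi> \<omega> w \<le> \<Phi> \<omega> (x \<omega>)"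
    and uniq: "\<And>\<omega> w. \<omega> \<in> space N \<Longrightarrow> w \<in> S \<Longrightarrow> \<Phi> \<omega> w = \<Phi> \<omega> (x \<omega>) \<Longrightarrow> w = x \<omega>"
  shows "x \<in> borel_measurable N"
  unfolding borel_measurable_iff_halfspace_le
proof (intro ballI allI)
  fix b :: 'a and c :: real
  define C where "C = S \<inter> {z. z \<bullet> b \<le> c}"
  have "compact C" unfolding C_def using S
    by (intro compact_Int_closed) (auto simp: closed_halfspace_le inner_commute[of _ b])
  show "{\<omega> \<in> space N. x \<omega> \<bullet> b \<le> c} \<in> sets N"
  proof (cases "C = {}")
    case True
    then have "{\<omega> \<in> space N. x \<omega> \<bullet> b \<le> c} = {}" using x unfolding C_def by blast
    then show ?thesis by (metis sets.empty_sets)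
  next
    case False
    obtain QC where QC: "countable QC" "QC \<subseteq> C" "C \<subseteq> closure QC" by (rule separable)
    obtain QS where QS: "countable QS" "QS \<subseteq> S" "S \<subseteq> closure QS" by (rule separable)
    have char: "x \<omega> \<bullet> b \<le> c \<longleftrightarrow> (\<forall>n::nat. \<exists>q\<in>QC. \<forall>q'\<in>QS. \<Phi> \<omega> q' \<le> \<Phi> \<omega> q + 1 / Suc n)"
      if \<omega>: "\<omega> \<in> space N" for \<omega>
    proof -
      have "C \<subseteq> S" and mem: "x \<omega> \<in> C \<longleftrightarrow> x \<omega> \<bullet> b \<le> c" using x[OF \<omega>] unfolding C_def by blast+
      from mem[symmetric] argmax_in_closed_iff[OF \<open>compact C\<close> False this(1) QC(2,3) QS(2,3)
          cont[OF \<omega>] x[OF \<omega>] max[OF \<omega>] uniq[OF \<omega>]]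
      show ?thesis by (rule trans)
    qed
    have "{\<omega> \<in> space N. x \<omega> \<bullet> b \<le> c}
        = {\<omega> \<in> space N. \<forall>n::nat. \<exists>q\<in>QC. \<forall>q'\<in>QS. \<Phi> \<omega> q' \<le> \<Phi> \<omega> q + 1 / Suc n}"
      by (simp add: char cong: conj_cong)
    also have "\<dots> \<in> sets N"
    proof (intro sets.sets_Collect_countable_All sets.sets_Collect_countable_Ex' sets.sets_Collect_countable_All')
      fix n :: nat and q q' assume "q \<in> QC" "q' \<in> QS"
      then have [measurable]: "(\<lambda>\<omega>. \<Phi> \<omega> q) \<in> borel_measurable N" "(\<lambda>\<omega>. \<Phi> \<omega> q') \<in> borel_measurable N"
        using meas QC(2) QS(2) unfolding C_def by auto
      show "{\<omega> \<in> space N. \<Phi> \<omega> q' \<le> \<Phi> \<omega> q + 1 / Suc n} \<in> sets N" by measurable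
    qed (use QC QS in auto)
    finally show ?thesis .
  qed
qed

lemma borel_measurable_continuous_on_comp:
  fixes f :: "'a::topological_space \<Rightarrow> 'c::topological_space"
  assumes "continuous_on S f" "closed S" "h \<in> borel_measurable N" "\<And>\<omega>. \<omega> \<in> space N \<Longrightarrow> h \<omega> \<in> S"
  shows "(\<lambda>\<omega>. f (h \<omega>)) \<in> borel_measurable N"
proof -
  have "(\<lambda>z. if z \<in> S then f z else f (SOME z. z \<in> S)) \<in> borel_measurable borel"
    using assms(1,2) by (intro borel_measurable_continuous_on_if) (auto simp: borel_closed)
  from measurable_compose[OF assms(3) this] show ?thesis
    by (rule measurable_cong[THEN iffD1, rotated]) (use assms(4) in auto)
qed

lemma borel_measurable_vec_nth:
  "f \<in> borel_measurable N \<Longrightarrow> (\<lambda>\<omega>. (f \<omega> :: 'a::euclidean_space^'n::finite) $ i) \<in> borel_measurable N"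
  by (intro borel_measurable_continuous_on[of "\<lambda>x. x $ i"] linear_continuous_on bounded_linear_vec_nth)

lemma borel_measurable_vecI:
  fixes f :: "'b \<Rightarrow> 'a::euclidean_space^'n::finite"
  assumes "\<And>i. (\<lambda>\<omega>. f \<omega> $ i) \<in> borel_measurable N"
  shows "f \<in> borel_measurable N"
  unfolding borel_measurable_euclidean_space[where f=f]
proof
  fix b :: "'a^'n" assume "b \<in> Basis"
  then obtain i u where b: "b = axis i u" "u \<in> Basis" unfolding Basis_vec_def by auto
  have "(\<lambda>\<omega>. f \<omega> $ i \<bullet> u) \<in> borel_measurable N" using assms[of i] by measurable
  then show "(\<lambda>x. f x \<bullet> b) \<in> borel_measurable N" unfolding b inner_axis .
qed

lemma closed_profiles:
  assumes "\<And>i. closed (X i)"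
  shows "closed (profiles (X :: 'n::finite \<Rightarrow> 'a::real_normed_vector set))"
proof -
  have "profiles X = (\<Inter>i. (\<lambda>p. p $ i) -` X i)" unfolding profiles_def by auto
  then show ?thesis
    using assms by (auto intro!: closed_INT continuous_closed_vimage linear_continuous_at bounded_linear_vec_nth)
qed

text \<open>A directional derivative is a pointwise limit of difference quotients, each measurable.\<close>
lemma borel_measurable_directional_derivative:
  fixes f :: "'a::euclidean_space \<Rightarrow> real" and y :: "'b \<Rightarrow> 'a"
  assumes der: "\<And>z. z \<in> S \<Longrightarrow> (f has_derivative (\<lambda>h. inner (df z) h)) (at z within S)"
    and S: "convex S" "closed S" and w: "w \<in> S"
    and y: "y \<in> borel_measurable N" "\<And>\<omega>. \<omega> \<in> space N \<Longrightarrow> y \<omega> \<in> S"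
  shows "(\<lambda>\<omega>. inner (df (y \<omega>)) (w - y \<omega>)) \<in> borel_measurable N"
proof (rule borel_measurable_LIMSEQ_real)
  define t where "t = (\<lambda>n::nat. 1 / real (Suc n))"
  have t: "0 < t n" "t n \<le> 1" for n unfolding t_def by auto
  have "filterlim t (at_right 0) sequentially"
    using LIMSEQ_inverse_real_of_nat t(1)
    by (intro tendsto_imp_filterlim_at_right) (auto simp: t_def inverse_eq_divide)
  then show "(\<lambda>n. (f (y \<omega> + t n *\<^sub>R (w - y \<omega>)) - f (y \<omega>)) / t n) \<longlonglongrightarrow> inner (df (y \<omega>)) (w - y \<omega>)"
    if "\<omega> \<in> space N" for \<omega>
    using filterlim_compose[OF convex_directional_quotient_tendsto[OF der[OF y(2)] S(1) y(2) w]] that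
    by (simp add: o_def)
  have f_cont: "continuous_on S f"
    using der has_derivative_continuous continuous_on_eq_continuous_within by blast
  fix n
  have "y \<omega> + t n *\<^sub>R (w - y \<omega>) \<in> S" if "\<omega> \<in> space N" for \<omega>
    using convexD_alt[OF S(1) y(2)[OF that] w less_imp_le[OF t(1)] t(2), of n]
    by (simp add: algebra_simps)
  then have "(\<lambda>\<omega>. f (y \<omega> + t n *\<^sub>R (w - y \<omega>))) \<in> borel_measurable N"
    using y(1) by (intro borel_measurable_continuous_on_comp[OF f_cont S(2)]) auto
  moreover have "(\<lambda>\<omega>. f (y \<omega>)) \<in> borel_measurable N"
    by (rule borel_measurable_continuous_on_comp[OF f_cont S(2) y])
  ultimately show "(\<lambda>\<omega>. (f (y \<omega> + t n *\<^sub>R (w - y \<omega>)) - f (y \<omega>)) / t n) \<in> borel_measurable N"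
    by measurable
qed

text \<open>Strong convexity makes the output of the step the unique maximiser of a function that is
  continuous in the point and measurable in the sample.\<close>
lemma borel_measurable_mirror_step:
  fixes y x g :: "'b \<Rightarrow> 'a::euclidean_space" and h psi :: "'a \<Rightarrow> real"
  assumes S: "compact S" "convex S"
    and psi: "strongly_convex_on S \<rho> psi" "\<rho> > 0"
      "\<And>z. z \<in> S \<Longrightarrow> (psi has_derivative (\<lambda>u. inner (dpsi z) u)) (at z within S)"
    and h: "\<And>z. z \<in> S \<Longrightarrow> (h has_derivative (\<lambda>u. inner (dh z) u)) (at z within S)"
    and meas: "y \<in> borel_measurable N" "g \<in> borel_measurable N"
    and y: "\<And>\<omega>. \<omega> \<in> space N \<Longrightarrow> y \<omega> \<in> S" and x: "\<And>\<omega>. \<omega> \<in> space N \<Longrightarrow> x \<omega> \<in> S"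
    and max: "\<And>\<omega> w. \<omega> \<in> space N \<Longrightarrow> w \<in> S \<Longrightarrow>
        inner (g \<omega> - dh (y \<omega>)) w - bregman psi dpsi w (y \<omega>)
          \<le> inner (g \<omega> - dh (y \<omega>)) (x \<omega>) - bregman psi dpsi (x \<omega>) (y \<omega>)"
  shows "x \<in> borel_measurable N"
proof -
  have "closed S" using S(1) by (rule compact_imp_closed)
  have psi_cont: "continuous_on S psi"
    using psi(3) has_derivative_continuous continuous_on_eq_continuous_within by blast
  define a where "a \<omega> = g \<omega> - dh (y \<omega>) + dpsi (y \<omega>)" for \<omega>
  \<comment> \<open>the objective, shifted by a constant depending only on the sample\<close>
  define \<Phi> where "\<Phi> \<omega> w = inner (g \<omega>) (w - y \<omega>) - inner (dh (y \<omega>)) (w - y \<omega>)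
      + inner (dpsi (y \<omega>)) (w - y \<omega>) - psi w + psi (y \<omega>)" for \<omega> w
  have \<Phi>_a: "\<Phi> \<omega> w = inner (a \<omega>) w - psi w - inner (a \<omega>) (y \<omega>) + psi (y \<omega>)" for \<omega> w
    unfolding \<Phi>_def a_def by (simp add: inner_diff_right inner_add_left inner_diff_left)
  have \<Phi>_obj: "\<Phi> \<omega> w = inner (g \<omega> - dh (y \<omega>)) w - bregman psi dpsi w (y \<omega>) - inner (g \<omega> - dh (y \<omega>)) (y \<omega>)"
    for \<omega> w
    unfolding \<Phi>_def bregman_def by (simp add: inner_diff_right inner_diff_left algebra_simps)
  show ?thesis
  proof (rule borel_measurable_argmax[OF S(1), of N \<Phi>])
    show "continuous_on S (\<Phi> \<omega>)" for \<omega>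
      unfolding \<Phi>_def by (intro continuous_intros psi_cont)
    show "(\<lambda>\<omega>. \<Phi> \<omega> w) \<in> borel_measurable N" if "w \<in> S" for w
    proof -
      have "(\<lambda>\<omega>. inner (dh (y \<omega>)) (w - y \<omega>)) \<in> borel_measurable N"
        by (rule borel_measurable_directional_derivative[OF h S(2) \<open>closed S\<close> that meas(1) y])
      moreover have "(\<lambda>\<omega>. inner (dpsi (y \<omega>)) (w - y \<omega>)) \<in> borel_measurable N"
        by (rule borel_measurable_directional_derivative[OF psi(3) S(2) \<open>closed S\<close> that meas(1) y])
      moreover have "(\<lambda>\<omega>. psi (y \<omega>)) \<in> borel_measurable N"
        by (rule borel_measurable_continuous_on_comp[OF psi_cont \<open>closed S\<close> meas(1) y])
      ultimately show ?thesis unfolding \<Phi>_def using meas by measurable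
    qed
    show "x \<omega> \<in> S" if "\<omega> \<in> space N" for \<omega>
      using x that .
    show "\<Phi> \<omega> w \<le> \<Phi> \<omega> (x \<omega>)" if "\<omega> \<in> space N" "w \<in> S" for \<omega> w
      using max[OF that] unfolding \<Phi>_obj by simp
    show "w = x \<omega>" if "\<omega> \<in> space N" "w \<in> S" "\<Phi> \<omega> w = \<Phi> \<omega> (x \<omega>)" for \<omega> w
    proof (rule strongly_convex_linear_argmax_unique[OF psi(1,2) that(2) x[OF that(1)]])
      show "inner (a \<omega>) z - psi z \<le> inner (a \<omega>) (x \<omega>) - psi (x \<omega>)" if "z \<in> S" for z
      proof -
        have "\<Phi> \<omega> z \<le> \<Phi> \<omega> (x \<omega>)" using max[OF \<open>\<omega> \<in> space N\<close> that] unfolding \<Phi>_obj by simp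
        then show ?thesis unfolding \<Phi>_a by simp
      qed
      show "inner (a \<omega>) w - psi w = inner (a \<omega>) (x \<omega>) - psi (x \<omega>)"
        using that(3) unfolding \<Phi>_a by simp
    qed
  qed
qed

lemma space_feedback_filtration [simp]: "space (feedback_filtration M fb t) = space M"
  unfolding feedback_filtration_def by (simp add: space_measure_of_conv)

lemma sets_feedback_filtration:
  "sets (feedback_filtration M fb t)
    = sigma_sets (space M) {fb i s -` A \<inter> space M | i s A. s < t \<and> A \<in> sets borel}"
  unfolding feedback_filtration_def by (rule sets_measure_of) auto

lemma measurable_feedback_filtration:
  fixes fb :: "'n \<Rightarrow> nat \<Rightarrow> 'b \<Rightarrow> 'a::euclidean_space"
  assumes "r < t"
  shows "fb i r \<in> borel_measurable (feedback_filtration M fb t)"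
proof (rule measurableI)
  fix A :: "'a set" assume "A \<in> sets borel"
  then show "fb i r -` A \<inter> space (feedback_filtration M fb t) \<in> sets (feedback_filtration M fb t)"
    unfolding sets_feedback_filtration using assms by (auto intro: sigma_sets.Basic)
qed simp

lemma subalgebra_feedback_filtration_mono:
  assumes "s \<le> t"
  shows "subalgebra (feedback_filtration M fb t) (feedback_filtration M fb s)"
proof -
  have "{fb i r -` A \<inter> space M | i r A. r < s \<and> A \<in> sets borel}
      \<subseteq> {fb i r -` A \<inter> space M | i r A. r < t \<and> A \<in> sets borel}"
    using assms by (blast intro: less_le_trans)
  then show ?thesis unfolding subalgebra_def sets_feedback_filtration by (simp add: sigma_sets_subseteq)
qed

lemma subalgebra_feedback_filtration:
  assumes "\<And>i r. r < t \<Longrightarrow> fb i r \<in> borel_measurable M"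
  shows "subalgebra M (feedback_filtration M fb t)"
proof -
  have "{fb i r -` A \<inter> space M | i r A. r < t \<and> A \<in> sets borel} \<subseteq> sets M"
    using assms measurable_sets by blast
  then show ?thesis unfolding subalgebra_def sets_feedback_filtration by (simp add: sets.sigma_sets_subset)
qed

lemma feedback_filtration_adapted:
  fixes pi :: "nat \<Rightarrow> 'b \<Rightarrow> 'c::topological_space" and fb :: "'n \<Rightarrow> nat \<Rightarrow> 'b \<Rightarrow> 'a::euclidean_space"
  assumes init: "\<And>\<omega>. \<omega> \<in> space M \<Longrightarrow> pi 0 \<omega> = p0"
    and fb: "\<And>s i. pi s \<in> borel_measurable M \<Longrightarrow> fb i s \<in> borel_measurable M"
    and step: "\<And>s N. space N = space M \<Longrightarrow> pi s \<in> borel_measurable N \<Longrightarrow>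
        (\<And>i. fb i s \<in> borel_measurable N) \<Longrightarrow> pi (Suc s) \<in> borel_measurable N"
  shows "pi s \<in> borel_measurable (feedback_filtration M fb s)"
    and "subalgebra M (feedback_filtration M fb s)"
proof -
  let ?F = "feedback_filtration M fb"
  have "pi s \<in> borel_measurable (?F s) \<and> (\<forall>r<s. \<forall>i. fb i r \<in> borel_measurable M)"
  proof (induction s)
    case 0
    have "(\<lambda>_. p0) \<in> borel_measurable (?F 0)" by simp
    then have "pi 0 \<in> borel_measurable (?F 0)"
      by (rule measurable_cong[THEN iffD1, rotated]) (use init in auto)
    then show ?case by simp
  next
    case (Suc s)
    then have pi_s: "pi s \<in> borel_measurable (?F s)"
      and fb_lt: "\<And>r i. r < s \<Longrightarrow> fb i r \<in> borel_measurable M" by auto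
    have "subalgebra M (?F s)" using fb_lt by (rule subalgebra_feedback_filtration)
    then have "pi s \<in> borel_measurable M" using pi_s by (rule measurable_from_subalg)
    then have fb_s: "fb i s \<in> borel_measurable M" for i by (rule fb)
    have "pi s \<in> borel_measurable (?F (Suc s))"
      by (rule measurable_from_subalg[OF subalgebra_feedback_filtration_mono pi_s]) simp
    then have "pi (Suc s) \<in> borel_measurable (?F (Suc s))"
      by (rule step[OF space_feedback_filtration _ measurable_feedback_filtration]) simp
    moreover have "\<forall>r<Suc s. \<forall>i. fb i r \<in> borel_measurable M"
      using fb_lt fb_s by (auto simp: less_Suc_eq)
    ultimately show ?case by blast
  qed
  then show "pi s \<in> borel_measurable (?F s)" and "subalgebra M (?F s)"
    by (blast, intro subalgebra_feedback_filtration) blast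
qed

lemma continuous_on_of_sum_power2_le:
  fixes f :: "'n::finite \<Rightarrow> 'a::real_normed_vector \<Rightarrow> 'b::real_normed_vector"
  assumes "\<And>p q. p \<in> S \<Longrightarrow> q \<in> S \<Longrightarrow> (\<Sum>i\<in>UNIV. (norm (f i p - f i q))\<^sup>2) \<le> L\<^sup>2 * (norm (p - q))\<^sup>2"
  shows "continuous_on S (f i)"
proof (rule lipschitz_on_continuous_on[OF lipschitz_onI])
  fix p q assume "p \<in> S" "q \<in> S"
  have "(norm (f i p - f i q))\<^sup>2 \<le> (\<Sum>j\<in>UNIV. (norm (f j p - f j q))\<^sup>2)" by (rule member_le_sum) auto
  also have "\<dots> \<le> (\<bar>L\<bar> * norm (p - q))\<^sup>2" using assms[OF \<open>p \<in> S\<close> \<open>q \<in> S\<close>] by (simp add: power_mult_distrib)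
  finally show "dist (f i p) (f i q) \<le> \<bar>L\<bar> * dist p q"
    unfolding dist_norm by (rule power2_le_imp_le) simp
qed simp

lemma md_sp_iterates_in_profiles:
  fixes pi :: "nat \<Rightarrow> 'b \<Rightarrow> 'a^'n::finite"
  assumes "pi0 \<in> profiles X" "\<And>\<omega>. \<omega> \<in> space M \<Longrightarrow> pi 0 \<omega> = pi0"
    and "\<And>s \<omega> i. \<omega> \<in> space M \<Longrightarrow> pi (Suc s) \<omega> $ i \<in> X i \<and> P s \<omega> i"
    and "\<omega> \<in> space M"
  shows "pi s \<omega> \<in> profiles X"
proof (cases s)
  case 0
  then show ?thesis using assms(1,2,4) by simp
next
  case (Suc r)
  then show ?thesis using assms(3)[OF assms(4), of r] unfolding profiles_def by blast
qed

lemma md_sp_iterates_adapted: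
  fixes X :: "'n::finite \<Rightarrow> 'a::euclidean_space set" and dv :: "'n \<Rightarrow> 'a^'n \<Rightarrow> 'a"
    and \<xi> :: "'n \<Rightarrow> nat \<Rightarrow> 'b \<Rightarrow> 'a" and pi :: "nat \<Rightarrow> 'b \<Rightarrow> 'a^'n" and \<sigma> pi0 :: "'a^'n"
  assumes X: "\<And>i. compact (X i)" "\<And>i. convex (X i)"
    and dv_cont: "\<And>i. continuous_on (profiles X) (dv i)"
    and psi_sc: "\<And>i. strongly_convex_on (X i) \<rho> psi" and "\<rho> > 0"
    and psi_grad: "\<And>i z. z \<in> X i \<Longrightarrow> (psi has_derivative (\<lambda>h. inner (dpsi z) h)) (at z within X i)"
    and G_grad: "\<And>i z. z \<in> X i \<Longrightarrow>
        ((\<lambda>w. G w (\<sigma> $ i)) has_derivative (\<lambda>h. inner (dG z (\<sigma> $ i)) h)) (at z within X i)"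
    and \<xi>: "\<And>i s. \<xi> i s \<in> borel_measurable M"
    and init: "\<And>\<omega>. \<omega> \<in> space M \<Longrightarrow> pi 0 \<omega> = pi0" and "pi0 \<in> profiles X"
    and step: "\<And>s \<omega> i. \<omega> \<in> space M \<Longrightarrow>
        pi (Suc s) \<omega> $ i \<in> X i \<and>
        (\<forall>x\<in>X i.
           eta s * inner (dv i (pi s \<omega>) + \<xi> i s \<omega> - \<mu> *\<^sub>R dG (pi s \<omega> $ i) (\<sigma> $ i)) x
             - bregman psi dpsi x (pi s \<omega> $ i)
           \<le> eta s * inner (dv i (pi s \<omega>) + \<xi> i s \<omega> - \<mu> *\<^sub>R dG (pi s \<omega> $ i) (\<sigma> $ i)) (pi (Suc s) \<omega> $ i)
             - bregman psi dpsi (pi (Suc s) \<omega> $ i) (pi s \<omega> $ i))"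
  defines "F \<equiv> feedback_filtration M (\<lambda>j r \<omega>. dv j (pi r \<omega>) + \<xi> j r \<omega>)"
  shows "pi s \<in> borel_measurable (F s)" and "subalgebra M (F s)"
proof -
  have prof: "pi s \<omega> \<in> profiles X" if "\<omega> \<in> space M" for s \<omega>
    by (rule md_sp_iterates_in_profiles[OF \<open>pi0 \<in> profiles X\<close> init step that])
  then have in_X: "pi s \<omega> $ i \<in> X i" if "\<omega> \<in> space M" for s \<omega> i
    using that unfolding profiles_def by blast
  have "closed (profiles X)" using X(1) by (intro closed_profiles compact_imp_closed)
  with prof have fb: "(\<lambda>\<omega>. dv i (pi s \<omega>) + \<xi> i s \<omega>) \<in> borel_measurable M"
    if "pi s \<in> borel_measurable M" for s i
    using borel_measurable_continuous_on_comp[OF dv_cont _ that] \<xi> by measurable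
  have "pi (Suc s) \<in> borel_measurable N"
    if N: "space N = space M" "pi s \<in> borel_measurable N"
      "\<And>i. (\<lambda>\<omega>. dv i (pi s \<omega>) + \<xi> i s \<omega>) \<in> borel_measurable N" for s and N :: "'b measure"
  proof (rule borel_measurable_vecI)
    fix i
    have h_grad: "((\<lambda>w. eta s * \<mu> * G w (\<sigma> $ i)) has_derivative
        (\<lambda>h. inner ((eta s * \<mu>) *\<^sub>R dG z (\<sigma> $ i)) h)) (at z within X i)" if "z \<in> X i" for z
      using has_derivative_mult_right[OF G_grad[OF that], of "eta s * \<mu>"] by simp
    show "(\<lambda>\<omega>. pi (Suc s) \<omega> $ i) \<in> borel_measurable N"
    proof (rule borel_measurable_mirror_step[where y="\<lambda>\<omega>. pi s \<omega> $ i"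
          and g="\<lambda>\<omega>. eta s *\<^sub>R (dv i (pi s \<omega>) + \<xi> i s \<omega>)",
          OF X(1,2) psi_sc \<open>\<rho> > 0\<close> psi_grad h_grad])
      show "(\<lambda>\<omega>. pi s \<omega> $ i) \<in> borel_measurable N" using N(2) by (rule borel_measurable_vec_nth)
      show "(\<lambda>\<omega>. eta s *\<^sub>R (dv i (pi s \<omega>) + \<xi> i s \<omega>)) \<in> borel_measurable N"
        using N(3)[of i] by measurable
      show "pi s \<omega> $ i \<in> X i" "pi (Suc s) \<omega> $ i \<in> X i" if "\<omega> \<in> space N" for \<omega>
        using in_X that N(1) by simp_all
      have "inner (eta s *\<^sub>R a - (eta s * \<mu>) *\<^sub>R b) z = eta s * inner (a - \<mu> *\<^sub>R b) z" for a b z :: 'a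
        by (simp add: inner_diff_left algebra_simps)
      then show "inner (eta s *\<^sub>R (dv i (pi s \<omega>) + \<xi> i s \<omega>) - (eta s * \<mu>) *\<^sub>R dG (pi s \<omega> $ i) (\<sigma> $ i)) w
            - bregman psi dpsi w (pi s \<omega> $ i)
          \<le> inner (eta s *\<^sub>R (dv i (pi s \<omega>) + \<xi> i s \<omega>) - (eta s * \<mu>) *\<^sub>R dG (pi s \<omega> $ i) (\<sigma> $ i))
            (pi (Suc s) \<omega> $ i) - bregman psi dpsi (pi (Suc s) \<omega> $ i) (pi s \<omega> $ i)"
        if "\<omega> \<in> space N" "w \<in> X i" for \<omega> w
        using step[of \<omega> s i] that N(1) by simp
    qed
  qed
  from feedback_filtration_adapted[where fb="\<lambda>j r \<omega>. dv j (pi r \<omega>) + \<xi> j r \<omega>", OF init fb this]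
  show "pi s \<in> borel_measurable (F s)" and "subalgebra M (F s)" unfolding F_def by blast+
qed

section \<open>Conditional expectations of the noise\<close>

lemma prob_space_sigma_finite_subalgebra:
  assumes "prob_space M" "subalgebra M F"
  shows "sigma_finite_subalgebra M F"
proof -
  interpret prob_space M by (rule assms(1))
  show ?thesis
    using finite_measure_axioms assms(2)
    by (intro finite_measure_subalgebra_is_sigma_finite)
      (simp add: finite_measure_subalgebra_def finite_measure_subalgebra_axioms_def)
qed

lemma integral_le_of_nn_cond_exp_le:
  fixes f :: "'b \<Rightarrow> real"
  assumes M: "prob_space M" and F: "subalgebra M F"
    and f: "f \<in> borel_measurable M" "\<And>\<omega>. 0 \<le> f \<omega>"
    and bound: "AE \<omega> in M. nn_cond_exp M F (\<lambda>\<omega>. ennreal (f \<omega>)) \<omega> \<le> ennreal c" and "0 \<le> c"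
  shows "integrable M f" and "(\<integral>\<omega>. f \<omega> \<partial>M) \<le> c"
proof -
  interpret prob_space M by (rule M)
  interpret sigma_finite_subalgebra M F by (rule prob_space_sigma_finite_subalgebra[OF M F])
  have "(\<integral>\<^sup>+\<omega>. ennreal (f \<omega>) \<partial>M) = (\<integral>\<^sup>+\<omega>. 1 * nn_cond_exp M F (\<lambda>\<omega>. ennreal (f \<omega>)) \<omega> \<partial>M)"
    using nn_cond_exp_intg[of "\<lambda>_. 1" "\<lambda>\<omega>. ennreal (f \<omega>)"] f(1) by simp
  also have "\<dots> \<le> (\<integral>\<^sup>+\<omega>. ennreal c \<partial>M)" using bound by (intro nn_integral_mono_AE) auto
  also have "\<dots> = ennreal c" by (simp add: emeasure_space_1)
  finally have nn: "(\<integral>\<^sup>+\<omega>. ennreal (f \<omega>) \<partial>M) \<le> ennreal c" .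
  then show int: "integrable M f"
    using f by (intro integrableI_nonneg) (auto simp: top.not_eq_extremum intro: le_less_trans)
  have "ennreal (\<integral>\<omega>. f \<omega> \<partial>M) \<le> ennreal c"
    using nn nn_integral_eq_integral[OF int] f(2) by simp
  then show "(\<integral>\<omega>. f \<omega> \<partial>M) \<le> c"
    using \<open>0 \<le> c\<close> by (simp add: ennreal_le_iff)
qed

lemma integral_mult_cond_exp_zero:
  fixes f g :: "'b \<Rightarrow> real"
  assumes M: "prob_space M" and F: "subalgebra M F"
    and f: "f \<in> borel_measurable F" "\<And>\<omega>. \<omega> \<in> space M \<Longrightarrow> \<bar>f \<omega>\<bar> \<le> K"
    and g: "g \<in> borel_measurable M" "integrable M g" and mean: "AE \<omega> in M. real_cond_exp M F g \<omega> = 0"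
  shows "integrable M (\<lambda>\<omega>. f \<omega> * g \<omega>)" and "(\<integral>\<omega>. f \<omega> * g \<omega> \<partial>M) = 0"
proof -
  interpret sigma_finite_subalgebra M F by (rule prob_space_sigma_finite_subalgebra[OF M F])
  have fM: "f \<in> borel_measurable M" using measurable_from_subalg[OF F f(1)] .
  show int: "integrable M (\<lambda>\<omega>. f \<omega> * g \<omega>)"
  proof (rule Bochner_Integration.integrable_bound[of _ "\<lambda>\<omega>. K * \<bar>g \<omega>\<bar>"])
    show "integrable M (\<lambda>\<omega>. K * \<bar>g \<omega>\<bar>)" using g(2) by auto
    have "norm (f \<omega> * g \<omega>) \<le> norm (K * \<bar>g \<omega>\<bar>)" if "\<omega> \<in> space M" for \<omega>
    proof -
      have "\<bar>f \<omega>\<bar> * \<bar>g \<omega>\<bar> \<le> K * \<bar>g \<omega>\<bar>" using f(2)[OF that] by (rule mult_right_mono) simp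
      then show ?thesis using f(2)[OF that] by (simp add: abs_mult)
    qed
    then show "AE \<omega> in M. norm (f \<omega> * g \<omega>) \<le> norm (K * \<bar>g \<omega>\<bar>)" by (rule AE_I2)
  qed (use fM g(1) in measurable)
  have "(\<integral>\<omega>. f \<omega> * g \<omega> \<partial>M) = (\<integral>\<omega>. f \<omega> * real_cond_exp M F g \<omega> \<partial>M)"
    by (rule real_cond_exp_intg(2)[OF int f(1) g(1), symmetric])
  also have "\<dots> = 0" using mean by (intro integral_eq_zero_AE) auto
  finally show "(\<integral>\<omega>. f \<omega> * g \<omega> \<partial>M) = 0" .
qed

lemma integral_inner_cond_exp_zero:
  fixes Y \<xi> :: "'b \<Rightarrow> 'a::euclidean_space"
  assumes M: "prob_space M" and F: "subalgebra M F"
    and Y: "Y \<in> borel_measurable F" "\<And>\<omega>. \<omega> \<in> space M \<Longrightarrow> norm (Y \<omega>) \<le> K"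
    and \<xi>: "\<xi> \<in> borel_measurable M" "integrable M (\<lambda>\<omega>. (norm (\<xi> \<omega>))\<^sup>2)"
    and mean: "\<And>b. b \<in> Basis \<Longrightarrow> AE \<omega> in M. real_cond_exp M F (\<lambda>\<omega>. inner (\<xi> \<omega>) b) \<omega> = 0"
  shows "integrable M (\<lambda>\<omega>. inner (\<xi> \<omega>) (Y \<omega>))" and "(\<integral>\<omega>. inner (\<xi> \<omega>) (Y \<omega>) \<partial>M) = 0"
proof -
  interpret prob_space M by (rule M)
  have norm_int: "integrable M (\<lambda>\<omega>. norm (\<xi> \<omega>))"
  proof (rule square_integrable_imp_integrable)
    show "(\<lambda>\<omega>. norm (\<xi> \<omega>)) \<in> borel_measurable M" using \<xi>(1) by measurable
  qed (use \<xi>(2) in simp)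
  have coordinate: "integrable M (\<lambda>\<omega>. inner (Y \<omega>) b * inner (\<xi> \<omega>) b)
      \<and> (\<integral>\<omega>. inner (Y \<omega>) b * inner (\<xi> \<omega>) b \<partial>M) = 0" if b: "b \<in> Basis" for b
  proof -
    have \<xi>_b: "(\<lambda>\<omega>. inner (\<xi> \<omega>) b) \<in> borel_measurable M" using \<xi>(1) by measurable
    have \<xi>_b_int: "integrable M (\<lambda>\<omega>. inner (\<xi> \<omega>) b)"
    proof (rule Bochner_Integration.integrable_bound[OF norm_int \<xi>_b])
      show "AE \<omega> in M. norm (inner (\<xi> \<omega>) b) \<le> norm (norm (\<xi> \<omega>))"
        using Basis_le_norm[OF b] by (intro AE_I2) simp
    qed
    have Y_b: "(\<lambda>\<omega>. inner (Y \<omega>) b) \<in> borel_measurable F" using Y(1) by measurable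
    have "\<bar>inner (Y \<omega>) b\<bar> \<le> K" if "\<omega> \<in> space M" for \<omega>
      using Basis_le_norm[OF b, of "Y \<omega>"] Y(2)[OF that] by simp
    from integral_mult_cond_exp_zero[OF M F Y_b this \<xi>_b \<xi>_b_int mean[OF b]] show ?thesis ..
  qed
  have eq: "inner (\<xi> \<omega>) (Y \<omega>) = (\<Sum>b\<in>Basis. inner (Y \<omega>) b * inner (\<xi> \<omega>) b)" for \<omega>
    by (subst euclidean_inner) (simp add: mult.commute)
  show "integrable M (\<lambda>\<omega>. inner (\<xi> \<omega>) (Y \<omega>))"
    unfolding eq using coordinate by (intro Bochner_Integration.integrable_sum) blast
  have "(\<integral>\<omega>. inner (\<xi> \<omega>) (Y \<omega>) \<partial>M) = (\<Sum>b\<in>Basis. \<integral>\<omega>. inner (Y \<omega>) b * inner (\<xi> \<omega>) b \<partial>M)"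
    unfolding eq using coordinate by (intro Bochner_Integration.integral_sum) blast
  then show "(\<integral>\<omega>. inner (\<xi> \<omega>) (Y \<omega>) \<partial>M) = 0" using coordinate by simp
qed

lemma md_sp_noise_terms_integral:
  fixes X :: "'n::finite \<Rightarrow> 'a::euclidean_space set" and \<xi> :: "'n \<Rightarrow> 'b \<Rightarrow> 'a"
    and y :: "'b \<Rightarrow> 'a^'n" and p :: "'a^'n"
  assumes M: "prob_space M" and F: "subalgebra M F" and X: "\<And>i. compact (X i)"
    and y: "y \<in> borel_measurable F" "\<And>\<omega>. \<omega> \<in> space M \<Longrightarrow> y \<omega> \<in> profiles X" and p: "p \<in> profiles X"
    and \<xi>: "\<And>i. \<xi> i \<in> borel_measurable M"
    and mean: "\<And>i b. b \<in> Basis \<Longrightarrow> AE \<omega> in M. real_cond_exp M F (\<lambda>\<omega>. inner (\<xi> i \<omega>) b) \<omega> = 0"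
    and var: "\<And>i. AE \<omega> in M. nn_cond_exp M F (\<lambda>\<omega>. ennreal ((norm (\<xi> i \<omega>))\<^sup>2)) \<omega> \<le> ennreal (C\<^sup>2)"
    and "c \<ge> 0"
  defines "Z \<equiv> \<lambda>\<omega>. (\<Sum>i\<in>UNIV. inner (\<xi> i \<omega>) (y \<omega> $ i - p $ i)) + c * (\<Sum>i\<in>UNIV. (norm (\<xi> i \<omega>))\<^sup>2)"
  shows "integrable M Z" and "(\<integral>\<omega>. Z \<omega> \<partial>M) \<le> c * (real CARD('n) * C\<^sup>2)"
proof -
  have "bounded (\<Union>i. X i)" by (intro compact_imp_bounded compact_UN) (auto intro: X)
  then obtain K where "\<forall>z\<in>(\<Union>i. X i). norm z \<le> K" unfolding bounded_iff by blast
  then have K: "\<And>i z. z \<in> X i \<Longrightarrow> norm z \<le> K" by blast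
  have Y_meas: "(\<lambda>\<omega>. y \<omega> $ i - p $ i) \<in> borel_measurable F" for i
    using borel_measurable_vec_nth[OF y(1)] by measurable
  have Y_bound: "norm (y \<omega> $ i - p $ i) \<le> 2 * K" if "\<omega> \<in> space M" for i \<omega>
  proof -
    have "y \<omega> $ i \<in> X i" "p $ i \<in> X i" using y(2)[OF that] p unfolding profiles_def by auto
    then have "norm (y \<omega> $ i) \<le> K" "norm (p $ i) \<le> K" by (auto intro: K)
    then show ?thesis using norm_triangle_ineq4[of "y \<omega> $ i" "p $ i"] by linarith
  qed
  have sq: "integrable M (\<lambda>\<omega>. (norm (\<xi> i \<omega>))\<^sup>2)" "(\<integral>\<omega>. (norm (\<xi> i \<omega>))\<^sup>2 \<partial>M) \<le> C\<^sup>2" for i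
  proof -
    have "(\<lambda>\<omega>. (norm (\<xi> i \<omega>))\<^sup>2) \<in> borel_measurable M" using \<xi>[of i] by measurable
    from integral_le_of_nn_cond_exp_le[OF M F this _ var[of i]]
    show "integrable M (\<lambda>\<omega>. (norm (\<xi> i \<omega>))\<^sup>2)" "(\<integral>\<omega>. (norm (\<xi> i \<omega>))\<^sup>2 \<partial>M) \<le> C\<^sup>2"
      by simp_all
  qed
  have cross: "integrable M (\<lambda>\<omega>. inner (\<xi> i \<omega>) (y \<omega> $ i - p $ i))"
    "(\<integral>\<omega>. inner (\<xi> i \<omega>) (y \<omega> $ i - p $ i) \<partial>M) = 0" for i
    using integral_inner_cond_exp_zero[OF M F Y_meas Y_bound[where i=i] \<xi> sq(1) mean[where i=i]] by blast+
  have sum_cross: "integrable M (\<lambda>\<omega>. \<Sum>i\<in>UNIV. inner (\<xi> i \<omega>) (y \<omega> $ i - p $ i))"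
    using cross(1) by (rule Bochner_Integration.integrable_sum)
  moreover have "integrable M (\<lambda>\<omega>. \<Sum>i\<in>UNIV. (norm (\<xi> i \<omega>))\<^sup>2)"
    using sq(1) by (rule Bochner_Integration.integrable_sum)
  ultimately show "integrable M Z" unfolding Z_def by simp
  have "(\<integral>\<omega>. Z \<omega> \<partial>M) = (\<Sum>i\<in>UNIV. \<integral>\<omega>. inner (\<xi> i \<omega>) (y \<omega> $ i - p $ i) \<partial>M)
      + c * (\<Sum>i\<in>UNIV. \<integral>\<omega>. (norm (\<xi> i \<omega>))\<^sup>2 \<partial>M)"
    using sum_cross cross(1) sq(1) unfolding Z_def by (simp add: Bochner_Integration.integral_sum)
  also have "\<dots> = c * (\<Sum>i\<in>UNIV. \<integral>\<omega>. (norm (\<xi> i \<omega>))\<^sup>2 \<partial>M)" using cross(2) by simp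
  also have "\<dots> \<le> c * (\<Sum>i\<in>(UNIV::'n set). C\<^sup>2)"
    using sq(2) \<open>c \<ge> 0\<close> by (intro mult_left_mono sum_mono)
  finally show "(\<integral>\<omega>. Z \<omega> \<partial>M) \<le> c * (real CARD('n) * C\<^sup>2)" by simp
qed

theorem theorem5:
  fixes M :: "'b measure"
    and X :: "'n::finite \<Rightarrow> 'a::euclidean_space set"
    and v :: "'n \<Rightarrow> 'a^'n \<Rightarrow> real"
    and dv :: "'n \<Rightarrow> 'a^'n \<Rightarrow> 'a"
    and psi :: "'a \<Rightarrow> real" and dpsi :: "'a \<Rightarrow> 'a"
    and G :: "'a \<Rightarrow> 'a \<Rightarrow> real" and dG :: "'a \<Rightarrow> 'a \<Rightarrow> 'a"
    and L \<rho> \<beta> \<gamma> \<mu> C theta kappa :: real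
    and eta :: "nat \<Rightarrow> real"
    and \<sigma> pmu pi0 :: "'a^'n"
    and \<xi> :: "'n \<Rightarrow> nat \<Rightarrow> 'b \<Rightarrow> 'a"
    and pi :: "nat \<Rightarrow> 'b \<Rightarrow> 'a^'n"
    and t :: nat
  assumes M: "prob_space M"
    \<comment> \<open>strategy sets\<close>
    and X_ne: "\<And>i. X i \<noteq> {}" and X_compact: "\<And>i. compact (X i)" and X_convex: "\<And>i. convex (X i)"
    \<comment> \<open>payoffs differentiable, dv i p is the block gradient of v i in player i's coordinate\<close>
    and v_diff: "\<And>i p. p \<in> profiles X \<Longrightarrow> v i differentiable (at p within profiles X)"
    and v_grad: "\<And>i p. p \<in> profiles X \<Longrightarrow>
        ((\<lambda>x. v i (upd p i x)) has_derivative (\<lambda>h. inner (dv i p) h)) (at (p $ i) within X i)"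
    \<comment> \<open>monotone game\<close>
    and monotone: "\<And>p q. p \<in> profiles X \<Longrightarrow> q \<in> profiles X \<Longrightarrow>
        (\<Sum>i\<in>UNIV. inner (dv i p - dv i q) (p $ i - q $ i)) \<le> 0"
    \<comment> \<open>L-smooth game\<close>
    and smooth: "\<And>p q. p \<in> profiles X \<Longrightarrow> q \<in> profiles X \<Longrightarrow>
        (\<Sum>i\<in>UNIV. (norm (dv i p - dv i q))\<^sup>2) \<le> L\<^sup>2 * (norm (p - q))\<^sup>2"
    \<comment> \<open>regularizer\<close>
    and psi_grad: "\<And>i y. y \<in> X i \<Longrightarrow> (psi has_derivative (\<lambda>h. inner (dpsi y) h)) (at y within X i)"
    and rho_pos: "\<rho> > 0"
    and psi_sc: "\<And>i. strongly_convex_on (X i) \<rho> psi"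
    \<comment> \<open>perturbation function\<close>
    and G_nonneg: "\<And>i x s. x \<in> X i \<Longrightarrow> s \<in> X i \<Longrightarrow> G x s \<ge> 0"
    and G_zero: "\<And>i s. s \<in> X i \<Longrightarrow> G s s = 0"
    and G_strict: "\<And>i s. s \<in> X i \<Longrightarrow> strict_convex_on' (X i) (\<lambda>x. G x s)"
    and G_grad: "\<And>i s y. s \<in> X i \<Longrightarrow> y \<in> X i \<Longrightarrow>
        ((\<lambda>x. G x s) has_derivative (\<lambda>h. inner (dG y s) h)) (at y within X i)"
    \<comment> \<open>Assumption A\<close>
    and beta_pos: "\<beta> > 0" and gamma_pos: "\<gamma> > 0"
    and assmA: "\<And>i s p q. s \<in> X i \<Longrightarrow> p \<in> X i \<Longrightarrow> q \<in> X i \<Longrightarrow>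
        \<gamma> * bregman psi dpsi q p \<le> G q s - G p s - inner (dG p s) (q - p)
        \<and> G q s - G p s - inner (dG p s) (q - p) \<le> \<beta> * bregman psi dpsi q p"
    \<comment> \<open>perturbed equilibrium\<close>
    and mu_pos: "\<mu> > 0"
    and sigma_in: "\<sigma> \<in> profiles X"
    and pmu_in: "pmu \<in> profiles X"
    and pmu_eq: "\<And>i x. x \<in> X i \<Longrightarrow>
        v i (upd pmu i x) - \<mu> * G x (\<sigma> $ i) \<le> v i pmu - \<mu> * G (pmu $ i) (\<sigma> $ i)"
    \<comment> \<open>parameters and learning rates\<close>
    and theta_def: "theta = (\<mu>\<^sup>2 * \<gamma> * \<rho>\<^sup>2 * (\<gamma> + 2 * \<beta>) + 8 * L\<^sup>2) / (2 * \<mu> * \<gamma> * \<rho>\<^sup>2)"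
    and kappa_def: "kappa = \<mu> * \<gamma> / 2"
    and eta_def: "\<And>s. eta s = 1 / (kappa * real s + 2 * theta)"
    \<comment> \<open>MD-SP with noisy feedback\<close>
    and xi_meas: "\<And>i s. \<xi> i s \<in> borel_measurable M"
    and pi0_in: "pi0 \<in> profiles X"
    and pi_init: "\<And>\<omega>. \<omega> \<in> space M \<Longrightarrow> pi 0 \<omega> = pi0"
    and pi_step: "\<And>s \<omega> i. \<omega> \<in> space M \<Longrightarrow>
        pi (Suc s) \<omega> $ i \<in> X i \<and>
        (\<forall>x\<in>X i.
           eta s * inner (dv i (pi s \<omega>) + \<xi> i s \<omega> - \<mu> *\<^sub>R dG (pi s \<omega> $ i) (\<sigma> $ i)) x
             - bregman psi dpsi x (pi s \<omega> $ i)
           \<le> eta s * inner (dv i (pi s \<omega>) + \<xi> i s \<omega> - \<mu> *\<^sub>R dG (pi s \<omega> $ i) (\<sigma> $ i)) (pi (Suc s) \<omega> $ i)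
             - bregman psi dpsi (pi (Suc s) \<omega> $ i) (pi s \<omega> $ i))"
    \<comment> \<open>Assumption B, w.r.t. the sigma-algebra generated by the feedback before round s\<close>
    and noise_mean: "\<And>i s b. b \<in> Basis \<Longrightarrow>
        AE \<omega> in M. real_cond_exp M
          (feedback_filtration M (\<lambda>j r \<omega>'. dv j (pi r \<omega>') + \<xi> j r \<omega>') s)
          (\<lambda>\<omega>'. inner (\<xi> i s \<omega>') b) \<omega> = 0"
    and noise_var: "\<And>i s.
        AE \<omega> in M. nn_cond_exp M
          (feedback_filtration M (\<lambda>j r \<omega>'. dv j (pi r \<omega>') + \<xi> j r \<omega>') s)
          (\<lambda>\<omega>'. ennreal ((norm (\<xi> i s \<omega>'))\<^sup>2)) \<omega> \<le> ennreal (C\<^sup>2)"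
  shows "(\<integral>\<^sup>+ \<omega>. ennreal (bregman_prof psi dpsi pmu (pi (Suc t) \<omega>)) \<partial>M)
    \<le> ennreal ((2 * theta - kappa) / (kappa * real t + 2 * theta) * bregman_prof psi dpsi pmu pi0
        + real CARD('n) * C\<^sup>2 / (\<rho> * (kappa * real t + 2 * theta))
          * (1 / kappa * ln (kappa / (2 * theta) * real t + 1) + 1 / (2 * theta)))"
proof -
  interpret prob_space M by (rule M)
  define F where "F = feedback_filtration M (\<lambda>j r \<omega>'. dv j (pi r \<omega>') + \<xi> j r \<omega>')"
  note step_size = md_sp_step_size_bounds[OF mu_pos gamma_pos rho_pos beta_pos theta_def kappa_def]
  have eta_pos: "0 < eta s" for s using step_size(1,2) by (simp add: eta_def add_nonneg_pos)
  have sigma_i: "\<sigma> $ i \<in> X i" for i using sigma_in unfolding profiles_def by auto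
  have pi_in: "pi s \<omega> \<in> profiles X" if "\<omega> \<in> space M" for s \<omega>
    by (rule md_sp_iterates_in_profiles[OF pi0_in pi_init pi_step that])
  have dv_cont: "continuous_on (profiles X) (dv i)" for i
    using smooth by (rule continuous_on_of_sum_power2_le)
  note adapted = md_sp_iterates_adapted[where M=M and X=X and dv=dv and \<xi>=\<xi> and pi=pi and \<sigma>=\<sigma>
      and psi=psi and dpsi=dpsi and G=G and dG=dG and eta=eta and \<mu>=\<mu>,
      OF X_compact X_convex dv_cont psi_sc rho_pos psi_grad G_grad[OF sigma_i] xi_meas pi_init pi0_in pi_step,
      folded F_def]
  define Z where "Z s \<omega> = (\<Sum>i\<in>UNIV. inner (\<xi> i s \<omega>) (pi s \<omega> $ i - pmu $ i))
      + eta s / \<rho> * (\<Sum>i\<in>UNIV. (norm (\<xi> i s \<omega>))\<^sup>2)" for s \<omega>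
  have Z: "integrable M (Z s)" "(\<integral>\<omega>. Z s \<omega> \<partial>M) \<le> eta s * (real CARD('n) * C\<^sup>2 / \<rho>)" for s
    using md_sp_noise_terms_integral[where \<xi>="\<lambda>i. \<xi> i s" and C=C and c="eta s / \<rho>",
        OF M adapted(2) X_compact adapted(1) pi_in pmu_in xi_meas noise_mean[folded F_def] noise_var[folded F_def]]
      eta_pos[of s] rho_pos
    unfolding Z_def by simp_all
  have recursion: "bregman_prof psi dpsi pmu (pi (Suc n) \<omega>)
      \<le> (1 - eta n * kappa) * bregman_prof psi dpsi pmu (pi n \<omega>) + eta n * Z n \<omega>" if "\<omega> \<in> space M" for n \<omega>
  proof -
    have regroup: "(1 - \<eta> * k) * D + \<eta> * E1 + \<eta>\<^sup>2 / r * E2 = (1 - \<eta> * k) * D + \<eta> * (E1 + \<eta> / r * E2)"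
      for \<eta> k D E1 E2 r :: real
      by (simp add: power2_eq_square algebra_simps)
    from md_sp_descent[OF X_convex pi_in[OF that] pmu_in v_grad[OF pmu_in] pmu_eq psi_grad psi_sc
        G_grad[OF sigma_i] assmA[OF sigma_i] monotone[OF pi_in[OF that] pmu_in] smooth[OF pi_in[OF that] pmu_in]
        pi_step[OF that] eta_pos rho_pos mu_pos less_imp_le[OF beta_pos] gamma_pos step_size(3)[folded eta_def]]
    show ?thesis unfolding Z_def kappa_def[symmetric] regroup .
  qed
  have "(\<integral>\<^sup>+\<omega>. ennreal (bregman_prof psi dpsi pmu (pi (Suc t) \<omega>)) \<partial>M)
    \<le> ennreal ((2 * theta - kappa) / (kappa * real t + 2 * theta) * bregman_prof psi dpsi pmu pi0
        + real CARD('n) * C\<^sup>2 / \<rho> / (kappa * real t + 2 * theta)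
          * (1 / kappa * ln (kappa / (2 * theta) * real t + 1) + 1 / (2 * theta)))"
    using pi_init rho_pos bregman_prof_nonneg[OF psi_sc less_imp_le[OF rho_pos] psi_grad pmu_in pi_in]
    by (intro nn_integral_le_of_recursion[OF M step_size(1,2) _ eta_def _ _ recursion Z]) auto
  then show ?thesis by (simp only: divide_divide_eq_left)
qed

end
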